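(* For any $p\ne q$, the relation $$A'_{pq}t_p^2t_q^2+B'_{pq}t_p^2+2C'_{pq}t_pt_q+B'_{qp}t_q^2+E'_{pq}=0,$$ where $A'_{pq}=\cos\gamma_{pq}-\cos(\alpha_{pq}+\beta_{pq}+\beta_{qp})$, $B'_{pq}=\cos\gamma_{pq}-\cos(\alpha_{pq}+\beta_{pq}-\beta_{qp})$, $B'_{qp}=\cos\gamma_{pq}-\cos(\alpha_{pq}+\beta_{qp}-\beta_{pq})$, $C'_{pq}=-2\sin\beta_{pq}\sin\beta_{qp}$, $E'_{pq}=\cos\gamma_{pq}-\cos(\alpha_{pq}-\beta_{pq}-\beta_{qp})$, is proportional to the relation $A_{pq}t_p^2t_q^2+B_{pq}t_p^2-2t_pt_q+B_{qp}t_q^2+E_{pq}=0$ with $A_{pq}=h_{qp}+h_{pq}-2g_{pq}+E_{pq}$, $B_{pq}=h_{qp}+E_{pq}$, $B_{qp}=h_{pq}+E_{pq}$ (i.e. the two polynomials in $t_p,t_q$ differ by a nonzero constant factor).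
   Context: Let $n\ge3$. $\mathbb{X}^n$ is one of $\mathbb{E}^n$; $\mathbb{S}^n$ (unit sphere in $\mathbb{E}^{n+1}$); $\Lambda^n$ (a sheet of the hyperboloid $(\mathbf{x},\mathbf{x})=-1$ in $\mathbb{E}^{n,1}$); tangent vectors are regarded as vectors of the ambient space. Consider a cross-polytope with vertices $\mathbf{a}_1,\dots,\mathbf{a}_n,\mathbf{b}_1,\dots,\mathbf{b}_n$ (facets: the non-degenerate $(n-1)$-simplices spanned by $n$-tuples containing exactly one of $\mathbf{a}_p,\mathbf{b}_p$ for each $p$). Let $\Delta=[\mathbf{a}_1\dots\mathbf{a}_n]$, $\Delta_p$ the facet spanned by $\mathbf{b}_p$ and the $\mathbf{a}_q$, $q\ne p$, $F_p$ the face of $\Delta$ opposite $\mathbf{a}_p$, $\Delta_{pq}$ the facet with vertices $\mathbf{b}_p,\mathbf{b}_q$ and $\mathbf{a}_r$, $r\ne p,q$, and $F_{pq}$ the face with vertices $\mathbf{a}_r$, $r\ne p,q$. $\alpha_{pq}$, $\beta_{pq}$, $\gamma_{pq}$ are the dihedral angles of the simplices $\Delta$, $\Delta_p$, $\Delta_{pq}$ respectively at their common codimension-2 face $F_{pq}$ (so $\alpha_{pq}=\alpha_{qp}$, $\gamma_{pq}=\gamma_{qp}$). Let $\mathbf{m}$ be a unit normal to $\Delta$, $\mathbf{n}_p$ the unit tangent vector to $\Delta$ orthogonal to $F_p$ pointing into $\Delta$, $\varphi_p$ the oriented dihedral angle between $\Delta$ and $\Delta_p$ with $\sin\varphi_p>0$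 iff $\Delta_p$ lies on the side into which $\mathbf{m}$ points, $t_p=\tan(\varphi_p/2)$, $\mathbf{b}_p^0$ the position of $\mathbf{b}_p$ when $\varphi_p=0$, and $\beta_p$ the length (for $\mathbb{E}^n$), its sine (for $\mathbb{S}^n$), or its hyperbolic sine (for $\Lambda^n$) of the altitude of $\Delta_p$ from $\mathbf{b}_p$. $G=(g_{pq})$ is the Gram matrix of $\mathbf{n}_1,\dots,\mathbf{n}_n$; $h_{pq}=\beta_p^{-1}(\mathbf{b}_p^0-\mathbf{a}_r,\mathbf{n}_q)$ ($r\ne q$) for $\mathbb{E}^n$ and $h_{pq}=\beta_p^{-1}(\mathbf{b}_p^0,\mathbf{n}_q)$ otherwise; with $\ell_{\mathbf{b}_p\mathbf{b}_q}$ the length of $[\mathbf{b}_p\mathbf{b}_q]$ and $\mathrm{dist}$ the distance in $\mathbb{X}^n$, $E_{pq}$ equals $\frac{1}{2\beta_p\beta_q}$ times $-\frac12\ell^2_{\mathbf{b}_p\mathbf{b}_q}+\frac12\mathrm{dist}^2(\mathbf{b}_p^0,\mathbf{b}_q^0)$, $\cos\ell_{\mathbf{b}_p\mathbf{b}_q}-\cos\mathrm{dist}(\mathbf{b}_p^0,\mathbf{b}_q^0)$, $-\cosh\ell_{\mathbf{b}_p\mathbf{b}_q}+\cosh\mathrm{dist}(\mathbf{b}_p^0,\mathbf{b}_q^0)$ for $\mathbb{E}^n,\mathbb{S}^n,\Lambda^n$ respectively. *)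

theory Defs
  imports "HOL-Analysis.Analysis"
begin

text \<open>Points and (tangent) vectors are vectors of the
ambient space, represented as functions nat \<Rightarrow> real whose support lies in
{..<N}, N the ambient dimension (N = n for Euc, N = n+1 for Sph and Hyp).
For Hyp the last coordinate (index N-1) is the time coordinate.
Vertices of the cross-polytope are indexed 0..n-1.\<close>

datatype geom = Euc | Sph | Hyp

definition amb :: "geom \<Rightarrow> nat \<Rightarrow> nat" where
  "amb G n = (if G = Euc then n else n + 1)"

definition inV :: "nat \<Rightarrow> (nat \<Rightarrow> real) \<Rightarrow> bool" where
  "inV N x \<longleftrightarrow> (\<forall>i\<ge>N. x i = 0)"

text \<open>The ambient scalar product: Euclidean for Euc and Sph, Minkowski for Hyp.\<close>
definition form :: "geom \<Rightarrow> nat \<Rightarrow> (nat \<Rightarrow> real) \<Rightarrow> (nat \<Rightarrow> real) \<Rightarrow> real" where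
  "form G n x y = (let N = amb G n in
     (\<Sum>i<N. x i * y i) - (if G = Hyp then 2 * x (N - 1) * y (N - 1) else 0))"

definition vsub :: "(nat \<Rightarrow> real) \<Rightarrow> (nat \<Rightarrow> real) \<Rightarrow> (nat \<Rightarrow> real)" where
  "vsub x y = (\<lambda>i. x i - y i)"

definition isPt :: "geom \<Rightarrow> nat \<Rightarrow> (nat \<Rightarrow> real) \<Rightarrow> bool" where
  "isPt G n x \<longleftrightarrow> inV (amb G n) x \<and>
     (case G of Euc \<Rightarrow> True
      | Sph \<Rightarrow> form G n x x = 1
      | Hyp \<Rightarrow> form G n x x = -1 \<and> x n > 0)"

definition gdist :: "geom \<Rightarrow> nat \<Rightarrow> (nat \<Rightarrow> real) \<Rightarrow> (nat \<Rightarrow> real) \<Rightarrow> real" where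
  "gdist G n x y = (case G of
       Euc \<Rightarrow> sqrt (form G n (vsub x y) (vsub x y))
     | Sph \<Rightarrow> arccos (form G n x y)
     | Hyp \<Rightarrow> arcosh (- form G n x y))"

text \<open>Position vector relative to a base point (Euclidean case) or the point
itself (spherical and hyperbolic case, where the model is linear).\<close>
definition rel :: "geom \<Rightarrow> (nat \<Rightarrow> real) \<Rightarrow> (nat \<Rightarrow> real) \<Rightarrow> (nat \<Rightarrow> real)" where
  "rel G x y = (if G = Euc then vsub x y else x)"

definition lincomb :: "nat set \<Rightarrow> (nat \<Rightarrow> real) \<Rightarrow> (nat \<Rightarrow> nat \<Rightarrow> real) \<Rightarrow> (nat \<Rightarrow> real)" where
  "lincomb I c v = (\<lambda>i. \<Sum>s\<in>I. c s * v s i)"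

text \<open>Non-degeneracy of the (n-1)-simplex with vertices v 0, ..., v (n-1):
affine independence in E^n, linear independence in S^n and Lambda^n.\<close>
definition nondeg :: "geom \<Rightarrow> nat \<Rightarrow> (nat \<Rightarrow> nat \<Rightarrow> real) \<Rightarrow> bool" where
  "nondeg G n v \<longleftrightarrow>
     (\<forall>c. lincomb {..<n} c v = (\<lambda>_. 0) \<and> (G = Euc \<longrightarrow> (\<Sum>s<n. c s) = 0)
          \<longrightarrow> (\<forall>s<n. c s = 0))"

definition inTan :: "geom \<Rightarrow> nat \<Rightarrow> (nat \<Rightarrow> nat \<Rightarrow> real) \<Rightarrow> (nat \<Rightarrow> real) \<Rightarrow> bool" where
  "inTan G n v w \<longleftrightarrow>
     (\<exists>c. w = lincomb {..<n} c v \<and> (G = Euc \<longrightarrow> (\<Sum>s<n. c s) = 0))"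

definition oth :: "nat \<Rightarrow> nat" where
  "oth i = (if i = 0 then 1 else 0)"

text \<open>Unit tangent vector to the simplex v, orthogonal to its face opposite v i,
pointing into the simplex.\<close>
definition nrm :: "geom \<Rightarrow> nat \<Rightarrow> (nat \<Rightarrow> nat \<Rightarrow> real) \<Rightarrow> nat \<Rightarrow> (nat \<Rightarrow> real)" where
  "nrm G n v i = (THE w. inTan G n v w \<and> form G n w w = 1 \<and>
       (\<forall>s<n. s \<noteq> i \<longrightarrow> form G n w (rel G (v s) (v (oth i))) = 0) \<and>
       form G n w (rel G (v i) (v (oth i))) > 0)"

text \<open>Dihedral angle of the simplex v at the codimension-2 face spanned by the
vertices other than v i and v j (i.e. between its faces opposite v i and v j).\<close>
definition dih :: "geom \<Rightarrow> nat \<Rightarrow> (nat \<Rightarrow> nat \<Rightarrow> real) \<Rightarrow> nat \<Rightarrow> nat \<Rightarrow> real" where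
  "dih G n v i j = arccos (- form G n (nrm G n v i) (nrm G n v j))"

definition planeI :: "geom \<Rightarrow> nat \<Rightarrow> (nat \<Rightarrow> nat \<Rightarrow> real) \<Rightarrow> nat set \<Rightarrow> (nat \<Rightarrow> real) set" where
  "planeI G n v I = {y. isPt G n y \<and>
       (\<exists>c. y = lincomb I c v \<and> (G = Euc \<longrightarrow> (\<Sum>s\<in>I. c s) = 1))}"

definition facetP :: "(nat \<Rightarrow> nat \<Rightarrow> real) \<Rightarrow> (nat \<Rightarrow> nat \<Rightarrow> real) \<Rightarrow> nat \<Rightarrow> (nat \<Rightarrow> nat \<Rightarrow> real)" where
  "facetP a b p = a(p := b p)"

definition facetPQ :: "(nat \<Rightarrow> nat \<Rightarrow> real) \<Rightarrow> (nat \<Rightarrow> nat \<Rightarrow> real) \<Rightarrow> nat \<Rightarrow> nat \<Rightarrow> (nat \<Rightarrow> nat \<Rightarrow> real)" where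
  "facetPQ a b p q = a(p := b p, q := b q)"

text \<open>b_p^0: the position of b_p when phi_p = 0, i.e. the point of the plane of
Delta with the same distances to the vertices of F_p as b_p, on the same side
of F_p as Delta.\<close>
definition bzero :: "geom \<Rightarrow> nat \<Rightarrow> (nat \<Rightarrow> nat \<Rightarrow> real) \<Rightarrow> (nat \<Rightarrow> nat \<Rightarrow> real) \<Rightarrow> nat \<Rightarrow> (nat \<Rightarrow> real)" where
  "bzero G n a b p = (THE y. y \<in> planeI G n a {..<n} \<and>
       (\<forall>r<n. r \<noteq> p \<longrightarrow> gdist G n y (a r) = gdist G n (b p) (a r)) \<and>
       form G n (nrm G n a p) (rel G y (a (oth p))) > 0)"

definition altitude :: "geom \<Rightarrow> nat \<Rightarrow> (nat \<Rightarrow> nat \<Rightarrow> real) \<Rightarrow> (nat \<Rightarrow> nat \<Rightarrow> real) \<Rightarrow> nat \<Rightarrow> real" where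
  "altitude G n a b p = Inf ((\<lambda>y. gdist G n (b p) y) ` planeI G n a ({..<n} - {p}))"

definition betaP :: "geom \<Rightarrow> nat \<Rightarrow> (nat \<Rightarrow> nat \<Rightarrow> real) \<Rightarrow> (nat \<Rightarrow> nat \<Rightarrow> real) \<Rightarrow> nat \<Rightarrow> real" where
  "betaP G n a b p = (case G of
       Euc \<Rightarrow> altitude G n a b p
     | Sph \<Rightarrow> sin (altitude G n a b p)
     | Hyp \<Rightarrow> sinh (altitude G n a b p))"

definition gG :: "geom \<Rightarrow> nat \<Rightarrow> (nat \<Rightarrow> nat \<Rightarrow> real) \<Rightarrow> nat \<Rightarrow> nat \<Rightarrow> real" where
  "gG G n a p q = form G n (nrm G n a p) (nrm G n a q)"

text \<open>h_pq = beta_p^{-1} (b_p^0 - a_r, n_q) (r \<noteq> q) for E^n, beta_p^{-1} (b_p^0, n_q) otherwise.\<close>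
definition hH :: "geom \<Rightarrow> nat \<Rightarrow> (nat \<Rightarrow> nat \<Rightarrow> real) \<Rightarrow> (nat \<Rightarrow> nat \<Rightarrow> real) \<Rightarrow> nat \<Rightarrow> nat \<Rightarrow> real" where
  "hH G n a b p q = form G n (rel G (bzero G n a b p) (a (oth q))) (nrm G n a q) / betaP G n a b p"

definition eE :: "geom \<Rightarrow> nat \<Rightarrow> (nat \<Rightarrow> nat \<Rightarrow> real) \<Rightarrow> (nat \<Rightarrow> nat \<Rightarrow> real) \<Rightarrow> nat \<Rightarrow> nat \<Rightarrow> real" where
  "eE G n a b p q = (let l = gdist G n (b p) (b q);
       d = gdist G n (bzero G n a b p) (bzero G n a b q) in
     1 / (2 * betaP G n a b p * betaP G n a b q) *
     (case G of
        Euc \<Rightarrow> - (1/2) * l\<^sup>2 + (1/2) * d\<^sup>2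
      | Sph \<Rightarrow> cos l - cos d
      | Hyp \<Rightarrow> - cosh l + cosh d))"

definition crossPolytope :: "geom \<Rightarrow> nat \<Rightarrow> (nat \<Rightarrow> nat \<Rightarrow> real) \<Rightarrow> (nat \<Rightarrow> nat \<Rightarrow> real) \<Rightarrow> bool" where
  "crossPolytope G n a b \<longleftrightarrow>
     (\<forall>i<n. isPt G n (a i) \<and> isPt G n (b i)) \<and>
     (\<forall>c :: nat \<Rightarrow> bool. nondeg G n (\<lambda>i. if c i then b i else a i))"

end

theory Submission
  imports Defs
begin

text \<open>Fix a vertex a_k of the ridge F_pq and use position vectors relative to a_k in E^n, and
  the points themselves in the linear models of S^n and Lambda^n. Let W be the span of the
  position vectors of F_pq; it is non-degenerate (positive definite, or Lorentzian because it
  contains the timelike a_k), so every vector splits orthogonally along W. Write A_p, A_q, B_p, B_q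
  for the components of a_p, a_q, b_p, b_q orthogonal to W. The simplices Delta, Delta_p, Delta_q,
  Delta_pq all contain F_pq, so their normals at the faces through F_pq lie in the orthogonal
  complement of W and arise from these four vectors by Gram-Schmidt; in particular the cosines of
  alpha_pq, beta_pq, beta_qp, gamma_pq are the normalized entries of their Gram matrix. The point
  b_p^0 is obtained from b_p by turning the altitude vector of Delta_p (the part of B_p orthogonal
  to A_q, of length beta_p) into beta_p n_p, so h_pq, g_pq and E_pq are functions of the same Gram
  matrix. After substituting, each coefficient of the primed relation is 2 sin beta_pq sin beta_qp
  times the corresponding coefficient of the other one, by the addition theorems.\<close>

section \<open>The ambient form\<close>

definition vadd :: "(nat \<Rightarrow> real) \<Rightarrow> (nat \<Rightarrow> real) \<Rightarrow> (nat \<Rightarrow> real)" where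
  "vadd x y = (\<lambda>i. x i + y i)"
definition vscale :: "real \<Rightarrow> (nat \<Rightarrow> real) \<Rightarrow> (nat \<Rightarrow> real)" where
  "vscale c x = (\<lambda>i. c * x i)"

definition form_weight :: "geom \<Rightarrow> nat \<Rightarrow> nat \<Rightarrow> real" where
  "form_weight G n i = (if G = Hyp \<and> i = amb G n - 1 then -1 else 1)"

lemma form_as_weighted_sum: "form G n x y = (\<Sum>i<amb G n. form_weight G n i * x i * y i)"
proof (cases "G = Hyp")
  case True
  have N: "amb G n = Suc n" using True by (simp add: amb_def)
  have "(\<Sum>i<Suc n. form_weight G n i * x i * y i) = (\<Sum>i<n. x i * y i) - x n * y n"
    using True N by (simp add: form_weight_def)
  moreover have "form G n x y = (\<Sum>i<n. x i * y i) + x n * y n - 2 * x n * y n"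
    using True N by (simp add: form_def Let_def)
  ultimately show ?thesis using N by simp
next
  case False
  then show ?thesis by (simp add: form_def form_weight_def Let_def)
qed

lemma form_sym: "form G n x y = form G n y x"
  unfolding form_as_weighted_sum by (simp add: mult.commute mult.left_commute)

lemma form_add_l: "form G n (vadd x y) z = form G n x z + form G n y z"
  unfolding form_as_weighted_sum vadd_def by (simp add: algebra_simps sum.distrib)
lemma form_add_r: "form G n z (vadd x y) = form G n z x + form G n z y"
  by (metis form_add_l form_sym)
lemma form_sub_l: "form G n (vsub x y) z = form G n x z - form G n y z"
  unfolding form_as_weighted_sum vsub_def by (simp add: algebra_simps sum_subtractf)
lemma form_sub_r: "form G n z (vsub x y) = form G n z x - form G n z y"
  by (metis form_sub_l form_sym)
lemma form_scale_l: "form G n (vscale c x) z = c * form G n x z"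
  unfolding form_as_weighted_sum vscale_def by (simp add: algebra_simps sum_distrib_left)
lemma form_scale_r: "form G n z (vscale c x) = c * form G n z x"
  by (metis form_scale_l form_sym)
lemma form_zero_l[simp]: "form G n (\<lambda>_. 0) z = 0"
  unfolding form_as_weighted_sum by simp
lemma form_zero_r[simp]: "form G n z (\<lambda>_. 0) = 0"
  unfolding form_as_weighted_sum by simp
lemma vsub_zero[simp]: "vsub x (\<lambda>_. 0) = x"
  unfolding vsub_def by simp
lemma form_lincomb_l: "finite I \<Longrightarrow> form G n (lincomb I c v) z = (\<Sum>s\<in>I. c s * form G n (v s) z)"
  unfolding form_as_weighted_sum lincomb_def
  by (simp add: sum_distrib_left sum_distrib_right mult.assoc mult.left_commute sum.swap[of _ I])
lemma form_lincomb_r: "finite I \<Longrightarrow> form G n z (lincomb I c v) = (\<Sum>s\<in>I. c s * form G n z (v s))"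
  by (simp add: form_lincomb_l form_sym[of _ _ z])

lemmas form_lin = form_add_l form_add_r form_sub_l form_sub_r form_scale_l form_scale_r

definition in_span :: "nat set \<Rightarrow> (nat \<Rightarrow> nat \<Rightarrow> real) \<Rightarrow> (nat \<Rightarrow> real) \<Rightarrow> bool" where
  "in_span I V x \<longleftrightarrow> (\<exists>c. x = lincomb I c V)"

lemma in_span_zero: "in_span I V (\<lambda>_. 0)"
  unfolding in_span_def lincomb_def by (rule exI[of _ "\<lambda>_. 0"]) simp

lemma in_span_gen: "finite I \<Longrightarrow> s \<in> I \<Longrightarrow> in_span I V (V s)"
proof -
  assume "finite I" "s \<in> I"
  then have "V s = lincomb I (\<lambda>t. if t = s then 1 else 0) V"
    unfolding lincomb_def by (auto simp: fun_eq_iff if_distrib[of "\<lambda>c. c * _"] sum.delta cong: if_cong)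
  then show ?thesis unfolding in_span_def by blast
qed

lemma in_span_add: "in_span I V x \<Longrightarrow> in_span I V y \<Longrightarrow> in_span I V (vadd x y)"
proof -
  assume "in_span I V x" "in_span I V y"
  then obtain c d where "x = lincomb I c V" "y = lincomb I d V" by (auto simp: in_span_def)
  then have "vadd x y = lincomb I (\<lambda>s. c s + d s) V"
    unfolding lincomb_def vadd_def by (simp add: algebra_simps sum.distrib)
  then show ?thesis unfolding in_span_def by blast
qed

lemma in_span_scale: "in_span I V x \<Longrightarrow> in_span I V (vscale c x)"
proof -
  assume "in_span I V x"
  then obtain d where "x = lincomb I d V" by (auto simp: in_span_def)
  then have "vscale c x = lincomb I (\<lambda>s. c * d s) V"
    unfolding lincomb_def vscale_def by (simp add: algebra_simps sum_distrib_left)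
  then show ?thesis unfolding in_span_def by blast
qed

lemma in_span_sub: "in_span I V x \<Longrightarrow> in_span I V y \<Longrightarrow> in_span I V (vsub x y)"
proof -
  assume "in_span I V x" "in_span I V y"
  then obtain c d where "x = lincomb I c V" "y = lincomb I d V" by (auto simp: in_span_def)
  then have "vsub x y = lincomb I (\<lambda>s. c s - d s) V"
    unfolding lincomb_def vsub_def by (simp add: algebra_simps sum_subtractf)
  then show ?thesis unfolding in_span_def by blast
qed

lemma in_span_mono: "finite J \<Longrightarrow> I \<subseteq> J \<Longrightarrow> in_span I V x \<Longrightarrow> in_span J V x"
proof -
  assume fin: "finite J" and IJ: "I \<subseteq> J" and "in_span I V x"
  then obtain c where x: "x = lincomb I c V" by (auto simp: in_span_def)
  have "lincomb J (\<lambda>s. if s \<in> I then c s else 0) V = lincomb I c V"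
    unfolding lincomb_def using fin IJ
    by (auto simp: fun_eq_iff if_distrib[of "\<lambda>c. c * _"] sum.If_cases Int_absorb1 cong: if_cong)
  then show ?thesis using x unfolding in_span_def by metis
qed

lemma in_span_cong: "(\<And>s. s \<in> I \<Longrightarrow> V s = V' s) \<Longrightarrow> in_span I V x = in_span I V' x"
  unfolding in_span_def lincomb_def by (simp cong: sum.cong)

lemma inV_lincomb: "(\<And>s. s \<in> I \<Longrightarrow> inV N (V s)) \<Longrightarrow> inV N (lincomb I c V)"
  unfolding inV_def lincomb_def by simp

lemma inV_in_span: "(\<And>s. s \<in> I \<Longrightarrow> inV N (V s)) \<Longrightarrow> in_span I V x \<Longrightarrow> inV N x"
  unfolding in_span_def using inV_lincomb by blast

lemma inV_vsub: "inV N x \<Longrightarrow> inV N y \<Longrightarrow> inV N (vsub x y)"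
  unfolding inV_def vsub_def by simp
lemma inV_vadd: "inV N x \<Longrightarrow> inV N y \<Longrightarrow> inV N (vadd x y)"
  unfolding inV_def vadd_def by simp
lemma inV_vscale: "inV N x \<Longrightarrow> inV N (vscale c x)"
  unfolding inV_def vscale_def by simp
lemma inV_zero: "inV N (\<lambda>_. 0)" unfolding inV_def by simp

lemma form_orth_span: "finite I \<Longrightarrow> (\<And>t. t \<in> I \<Longrightarrow> form G n z (V t) = 0) \<Longrightarrow> in_span I V y \<Longrightarrow> form G n z y = 0"
  unfolding in_span_def by (auto simp: form_lincomb_r)

section \<open>Positive definite and Lorentzian forms\<close>

lemma form_self_nonneg: "G \<noteq> Hyp \<Longrightarrow> form G n x x \<ge> 0"
  unfolding form_as_weighted_sum form_weight_def by (auto intro!: sum_nonneg)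

lemma form_self_eq_0_imp: "G \<noteq> Hyp \<Longrightarrow> inV (amb G n) x \<Longrightarrow> form G n x x = 0 \<Longrightarrow> x = (\<lambda>_. 0)"
proof -
  assume G: "G \<noteq> Hyp" and iv: "inV (amb G n) x" and z: "form G n x x = 0"
  have "(\<Sum>i<amb G n. x i * x i) = 0" using z G unfolding form_as_weighted_sum form_weight_def by simp
  then have "\<forall>i\<in>{..<amb G n}. x i * x i = 0"
    by (subst sum_nonneg_eq_0_iff[symmetric]) auto
  then show ?thesis using iv unfolding inV_def by (auto simp: fun_eq_iff) (metis not_le lessThan_iff)
qed

definition dot :: "nat \<Rightarrow> (nat \<Rightarrow> real) \<Rightarrow> (nat \<Rightarrow> real) \<Rightarrow> real" where
  "dot n x y = (\<Sum>i<n. x i * y i)"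

lemma form_Hyp_dot: "form Hyp n x y = dot n x y - x n * y n"
  unfolding form_def dot_def amb_def Let_def by simp

lemma dot_self_nonneg: "dot n x x \<ge> 0" unfolding dot_def by (auto intro!: sum_nonneg)

lemma dot_Cauchy_Schwarz: "dot n x y \<le> sqrt (dot n x x) * sqrt (dot n y y)"
proof -
  have "dot n x y \<le> (\<Sum>i<n. \<bar>x i\<bar> * \<bar>y i\<bar>)" unfolding dot_def
    by (rule sum_mono) (metis abs_ge_self abs_mult)
  also have "\<dots> \<le> L2_set x {..<n} * L2_set y {..<n}" by (rule L2_set_mult_ineq)
  also have "\<dots> = sqrt (dot n x x) * sqrt (dot n y y)"
    unfolding L2_set_def dot_def by (simp add: power2_eq_square)
  finally show ?thesis .
qed

lemma dot_square_le: "(dot n x y)^2 \<le> dot n x x * dot n y y"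
proof -
  have "\<bar>dot n x y\<bar> \<le> sqrt (dot n x x) * sqrt (dot n y y)"
    using dot_Cauchy_Schwarz[of n x y] dot_Cauchy_Schwarz[of n "\<lambda>i. - x i" y]
    by (simp add: dot_def sum_negf abs_le_iff)
  then have "\<bar>dot n x y\<bar>^2 \<le> (sqrt (dot n x x) * sqrt (dot n y y))^2"
    by (rule power_mono) simp
  then show ?thesis using dot_self_nonneg[of n x] dot_self_nonneg[of n y] by (simp add: power_mult_distrib del: real_sqrt_mult)
qed

lemma dot_self_eq_0_imp: "dot n x x = 0 \<Longrightarrow> i < n \<Longrightarrow> x i = 0"
proof -
  assume "dot n x x = 0" "i < n"
  then have "\<forall>i\<in>{..<n}. x i * x i = 0" unfolding dot_def
    by (subst sum_nonneg_eq_0_iff[symmetric]) auto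
  then show ?thesis using \<open>i < n\<close> by simp
qed

lemma form_Hyp_orth_timelike:
  assumes xt: "form Hyp n x x < 0" and zx: "form Hyp n z x = 0"
  shows "form Hyp n z z \<ge> 0" and "form Hyp n z z = 0 \<Longrightarrow> inV (Suc n) z \<Longrightarrow> z = (\<lambda>_. 0)"
proof -
  let ?a = "dot n x x" and ?b = "dot n z z" and ?t = "x n" and ?s = "z n"
  have A: "?a < ?t^2" using xt by (simp add: form_Hyp_dot power2_eq_square)
  have a0: "?a \<ge> 0" "?b \<ge> 0" by (rule dot_self_nonneg)+
  have t0: "?t^2 > 0" using A a0 by linarith
  have zx': "dot n z x = ?s * ?t" using zx by (simp add: form_Hyp_dot)
  have cs: "(?s * ?t)^2 \<le> ?b * ?a" using dot_square_le[of n z x] zx' by simp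
  have "?b * ?a \<le> ?b * ?t^2" using A a0 by (simp add: mult_left_mono)
  then have 1: "?s^2 * ?t^2 \<le> ?b * ?t^2" using cs by (simp add: power_mult_distrib)
  then have sb: "?s^2 \<le> ?b" using t0 by simp
  then show "form Hyp n z z \<ge> 0" by (simp add: form_Hyp_dot power2_eq_square)
  assume zz: "form Hyp n z z = 0" and iv: "inV (Suc n) z"
  have eq: "?b = ?s^2" using zz by (simp add: form_Hyp_dot power2_eq_square)
  have "?b = 0"
  proof (rule ccontr)
    assume "?b \<noteq> 0" then have "?b > 0" using a0 by simp
    then have "?b * ?a < ?b * ?t^2" using A by simp
    then have "?s^2 * ?t^2 < ?b * ?t^2" using cs by (simp add: power_mult_distrib)
    then show False using eq by simp
  qed
  then have s0: "?s = 0" using eq by simp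
  show "z = (\<lambda>_. 0)"
  proof
    fix i show "z i = 0"
      using dot_self_eq_0_imp[OF \<open>?b = 0\<close>, of i] s0 iv unfolding inV_def
      by (cases "i < n"; cases "i = n") auto
  qed
qed

lemma isPt_Hyp: "isPt Hyp n x \<longleftrightarrow> inV (Suc n) x \<and> form Hyp n x x = -1 \<and> x n > 0"
  unfolding isPt_def amb_def by simp

lemma hyp_time_coord: "isPt Hyp n x \<Longrightarrow> x n = sqrt (1 + dot n x x)"
proof -
  assume "isPt Hyp n x"
  then have "dot n x x - x n * x n = -1" "x n > 0" by (auto simp: isPt_Hyp form_Hyp_dot)
  then have "(x n)^2 = 1 + dot n x x" "x n \<ge> 0" by (auto simp: power2_eq_square)
  then show ?thesis by (metis real_sqrt_unique)
qed

lemma form_Hyp_points_le: assumes "isPt Hyp n x" "isPt Hyp n y" shows "form Hyp n x y \<le> -1"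
proof -
  let ?a = "sqrt (dot n x x)" and ?b = "sqrt (dot n y y)"
  have a: "?a \<ge> 0" "?b \<ge> 0" using dot_self_nonneg[of n x] dot_self_nonneg[of n y] by simp_all
  have tx: "x n = sqrt (1 + ?a^2)" using hyp_time_coord[OF assms(1)] dot_self_nonneg[of n x] by simp
  have ty: "y n = sqrt (1 + ?b^2)" using hyp_time_coord[OF assms(2)] dot_self_nonneg[of n y] by simp
  have gen: "\<And>u v::real. (1 + u * v)^2 \<le> (1 + u^2) * (1 + v^2)"
  proof -
    fix u v :: real have "0 \<le> (u - v)^2" by simp
    then show "(1 + u * v)^2 \<le> (1 + u^2) * (1 + v^2)" by (simp add: power2_eq_square algebra_simps)
  qed
  have "(1 + ?a * ?b)^2 \<le> (1 + ?a^2) * (1 + ?b^2)" by (rule gen)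
  then have "1 + ?a * ?b \<le> sqrt ((1 + ?a^2) * (1 + ?b^2))"
    using a by (simp add: real_le_rsqrt)
  then have "1 + ?a * ?b \<le> x n * y n" using tx ty by (simp add: real_sqrt_mult)
  moreover have "dot n x y \<le> ?a * ?b" by (rule dot_Cauchy_Schwarz)
  ultimately show ?thesis by (simp add: form_Hyp_dot)
qed

lemma form_Hyp_reverse_Cauchy_Schwarz:
  assumes m: "form Hyp n m m < 0" "m n > 0" and y: "isPt Hyp n y"
  shows "- form Hyp n m y \<ge> sqrt (- form Hyp n m m)"
proof -
  let ?k = "sqrt (- form Hyp n m m)"
  have k: "?k > 0" using m by simp
  let ?z = "\<lambda>i. if i \<le> n then m i / ?k else 0"
  have zm: "form Hyp n ?z ?z = form Hyp n m m / ?k^2" "form Hyp n ?z y = form Hyp n m y / ?k"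
    by (auto simp: form_Hyp_dot dot_def sum_divide_distrib diff_divide_distrib power2_eq_square intro!: sum.cong)
  have "?k^2 = - form Hyp n m m" using m by simp
  then have "form Hyp n ?z ?z = -1" using zm k m by (simp add: field_simps)
  then have "isPt Hyp n ?z" using k m unfolding isPt_Hyp inV_def by auto
  then have "form Hyp n ?z y \<le> -1" using form_Hyp_points_le y by blast
  then have "form Hyp n m y / ?k \<le> -1" using zm by simp
  then have "form Hyp n m y \<le> - ?k" using k by (simp add: field_simps)
  then show ?thesis by simp
qed

lemma hyp_timelike_future:
  assumes m: "form Hyp n m m < 0" and a: "isPt Hyp n a" and ma: "form Hyp n m a < 0"
  shows "m n > 0"
proof (rule ccontr)
  assume "\<not> m n > 0"
  moreover have "m n \<noteq> 0"
  proof
    assume "m n = 0"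
    then show False using m dot_self_nonneg[of n m] by (simp add: form_Hyp_dot)
  qed
  ultimately have "vscale (-1) m n > 0" by (simp add: vscale_def)
  moreover have "form Hyp n (vscale (-1) m) (vscale (-1) m) < 0" using m by (simp add: form_lin)
  ultimately have "sqrt (- form Hyp n (vscale (-1) m) (vscale (-1) m)) \<le> - form Hyp n (vscale (-1) m) a"
    using form_Hyp_reverse_Cauchy_Schwarz[OF _ _ a] by blast
  then have "sqrt (- form Hyp n m m) \<le> form Hyp n m a" by (simp add: form_lin)
  moreover have "sqrt (- form Hyp n m m) > 0" using m by simp
  ultimately show False using ma by linarith
qed

lemma form_nonHyp_dot: "G \<noteq> Hyp \<Longrightarrow> form G n x y = dot (amb G n) x y"
  unfolding form_def dot_def Let_def by simp

lemma form_Cauchy_Schwarz: "G \<noteq> Hyp \<Longrightarrow> form G n x y \<le> sqrt (form G n x x) * sqrt (form G n y y)"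
  using dot_Cauchy_Schwarz by (simp add: form_nonHyp_dot)

lemma form_abs_Cauchy_Schwarz: "G \<noteq> Hyp \<Longrightarrow> \<bar>form G n x y\<bar> \<le> sqrt (form G n x x) * sqrt (form G n y y)"
proof -
  assume G: "G \<noteq> Hyp"
  have "form G n (vscale (-1) x) y \<le> sqrt (form G n (vscale (-1) x) (vscale (-1) x)) * sqrt (form G n y y)"
    by (rule form_Cauchy_Schwarz[OF G])
  then have "- form G n x y \<le> sqrt (form G n x x) * sqrt (form G n y y)" by (simp add: form_lin)
  then show ?thesis using form_Cauchy_Schwarz[OF G, of n x y] by linarith
qed

lemma arcosh_mono: "(1::real) \<le> x \<Longrightarrow> x \<le> y \<Longrightarrow> arcosh x \<le> arcosh y"
  using arcosh_less_iff_real[of y x] by (metis linorder_not_le order_trans)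

lemma form_Sph_abs_le_1: "form Sph n x x = 1 \<Longrightarrow> form Sph n y y = 1 \<Longrightarrow> \<bar>form Sph n x y\<bar> \<le> 1"
  using form_abs_Cauchy_Schwarz[of Sph n x y] by simp

lemma cos_gdist_Sph: "isPt Sph n x \<Longrightarrow> isPt Sph n y \<Longrightarrow> cos (gdist Sph n x y) = form Sph n x y"
  unfolding gdist_def isPt_def using form_Sph_abs_le_1 by (simp add: cos_arccos_abs)

lemma cosh_gdist_Hyp: "isPt Hyp n x \<Longrightarrow> isPt Hyp n y \<Longrightarrow> cosh (gdist Hyp n x y) = - form Hyp n x y"
  unfolding gdist_def using form_Hyp_points_le[of n x y] by simp

section \<open>Gram-Schmidt\<close>

definition orth_proj :: "geom \<Rightarrow> nat \<Rightarrow> nat set \<Rightarrow> (nat \<Rightarrow> nat \<Rightarrow> real) \<Rightarrow> ((nat \<Rightarrow> real) \<Rightarrow> (nat \<Rightarrow> real)) \<Rightarrow> bool" where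
  "orth_proj G n J V Pr \<longleftrightarrow> (\<forall>x. in_span J V (Pr x) \<and> (\<forall>t\<in>J. form G n (vsub x (Pr x)) (V t) = 0))"

lemma orth_proj_empty: "orth_proj G n {} V (\<lambda>x. \<lambda>_. 0)"
  unfolding orth_proj_def by (simp add: in_span_zero)

lemma orth_proj_insert:
  assumes fin: "finite J" and P: "orth_proj G n J V Pr" and j: "j \<notin> J"
    and ee: "form G n (vsub (V j) (Pr (V j))) (vsub (V j) (Pr (V j))) \<noteq> 0"
  shows "\<exists>Pr'. orth_proj G n (insert j J) V Pr'"
proof -
  define e where "e = vsub (V j) (Pr (V j))"
  have ee': "form G n e e \<noteq> 0" using ee e_def by simp
  define Pr' where "Pr' = (\<lambda>x. vadd (Pr x) (vscale (form G n (vsub x (Pr x)) e / form G n e e) e))"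
  have finI: "finite (insert j J)" using fin by simp
  have eJ: "\<And>t. t \<in> J \<Longrightarrow> form G n e (V t) = 0" using P unfolding orth_proj_def e_def by blast
  have espn: "in_span (insert j J) V e" unfolding e_def
    by (rule in_span_sub, rule in_span_gen[OF finI], simp, rule in_span_mono[OF finI], auto) (use P orth_proj_def in blast)
  have "orth_proj G n (insert j J) V Pr'"
    unfolding orth_proj_def
  proof (intro allI conjI ballI)
    fix x
    have "in_span J V (Pr x)" using P orth_proj_def by blast
    then have "in_span (insert j J) V (Pr x)" by (intro in_span_mono[OF finI, of J]) auto
    then show "in_span (insert j J) V (Pr' x)" unfolding Pr'_def by (intro in_span_add in_span_scale espn)
    define d where "d = vsub x (Pr x)"
    have dJ: "\<And>t. t \<in> J \<Longrightarrow> form G n d (V t) = 0" using P unfolding orth_proj_def d_def by blast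
    fix t assume t: "t \<in> insert j J"
    have red: "form G n (vsub x (Pr' x)) (V t) = form G n d (V t) - (form G n d e / form G n e e) * form G n e (V t)"
      unfolding Pr'_def d_def by (simp add: form_sub_l form_add_l form_scale_l)
    show "form G n (vsub x (Pr' x)) (V t) = 0"
    proof (cases "t \<in> J")
      case True then show ?thesis using red dJ eJ by simp
    next
      case False
      then have tj: "t = j" using t by simp
      have sp: "in_span J V (Pr (V j))" using P orth_proj_def by blast
      have d1: "form G n d (V j) = form G n d e"
      proof -
        have "form G n d e = form G n d (V j) - form G n d (Pr (V j))" unfolding e_def by (simp add: form_sub_r)
        moreover have "form G n d (Pr (V j)) = 0" by (rule form_orth_span[OF fin dJ sp])
        ultimately show ?thesis by simp
      qed
      have e1: "form G n e (V j) = form G n e e"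
      proof -
        have "form G n e e = form G n e (V j) - form G n e (Pr (V j))" unfolding e_def by (simp add: form_sub_r)
        moreover have "form G n e (Pr (V j)) = 0" by (rule form_orth_span[OF fin eJ sp])
        ultimately show ?thesis by simp
      qed
      show ?thesis using red d1 e1 tj ee' by simp
    qed
  qed
  then show ?thesis by blast
qed

definition lin_indep :: "nat set \<Rightarrow> (nat \<Rightarrow> nat \<Rightarrow> real) \<Rightarrow> bool" where
  "lin_indep J V \<longleftrightarrow> (\<forall>c. lincomb J c V = (\<lambda>_. 0) \<longrightarrow> (\<forall>s\<in>J. c s = 0))"

lemma lin_indep_not_in_span:
  assumes fin: "finite J" and ind: "lin_indep J V" and K: "K \<subseteq> J" and j: "j \<in> J" "j \<notin> K"
  shows "\<not> in_span K V (V j)"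
proof
  assume "in_span K V (V j)"
  then obtain c where c: "V j = lincomb K c V" unfolding in_span_def by blast
  define c' where "c' = (\<lambda>s. if s = j then -1 else if s \<in> K then c s else 0)"
  have finK: "finite K" using fin K finite_subset by blast
  have "lincomb J c' V = (\<lambda>_. 0)"
  proof
    fix i
    have "(\<Sum>s\<in>J. c' s * V s i) = (\<Sum>s\<in>insert j K. c' s * V s i)"
      by (rule sum.mono_neutral_right) (use fin K j in \<open>auto simp: c'_def\<close>)
    also have "\<dots> = - V j i + (\<Sum>s\<in>K. c s * V s i)"
      using j finK by (auto simp: c'_def intro!: sum.cong)
    also have "\<dots> = 0" using c unfolding lincomb_def by (simp add: fun_eq_iff)
    finally show "lincomb J c' V i = 0" unfolding lincomb_def .
  qed
  then have "c' j = 0" using ind j unfolding lin_indep_def by blast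
  then show False unfolding c'_def by simp
qed

lemma lin_indep_subset: assumes fin: "finite J" and ind: "lin_indep J V" and IJ: "I \<subseteq> J" shows "lin_indep I V"
  unfolding lin_indep_def
proof (intro allI impI ballI)
  fix c s assume lc: "lincomb I c V = (\<lambda>_. 0)" and s: "s \<in> I"
  define c' where "c' = (\<lambda>t. if t \<in> I then c t else 0)"
  have "lincomb J c' V = lincomb I c V"
    unfolding lincomb_def c'_def using fin IJ
    by (auto simp: fun_eq_iff if_distrib[of "\<lambda>c. c * _"] sum.If_cases Int_absorb1 cong: if_cong)
  then have "c' s = 0" using ind lc s IJ unfolding lin_indep_def by auto
  then show "c s = 0" using s c'_def by simp
qed

text \<open>Gram-Schmidt step: the component of a new vector orthogonal to the current span is not
  isotropic, because the orthogonal complement of the span is positive definite (in the hyperbolic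
  case since the span contains the timelike vector V r0).\<close>
lemma orth_proj_extend:
  assumes fin: "finite J" and ind: "lin_indep J V" and iv: "\<And>s. s \<in> J \<Longrightarrow> inV (amb G n) (V s)"
    and hyp: "G = Hyp \<Longrightarrow> r0 \<in> K \<and> form G n (V r0) (V r0) < 0"
    and K: "K \<subseteq> J" and P: "orth_proj G n K V Pr" and j: "j \<in> J" "j \<notin> K"
  shows "\<exists>Pr'. orth_proj G n (insert j K) V Pr'"
proof -
  define e where "e = vsub (V j) (Pr (V j))"
  have finK: "finite K" using fin K finite_subset by blast
  have sp: "in_span K V (Pr (V j))" using P orth_proj_def by blast
  have enz: "e \<noteq> (\<lambda>_. 0)"
  proof
    assume "e = (\<lambda>_. 0)"
    then have "V j = Pr (V j)" unfolding e_def vsub_def by (simp add: fun_eq_iff)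
    then have "in_span K V (V j)" using sp by simp
    then show False using lin_indep_not_in_span[OF fin ind K j] by simp
  qed
  have eiv: "inV (amb G n) e" unfolding e_def
    by (rule inV_vsub[OF iv[OF j(1)] inV_in_span[OF _ sp]]) (use iv K in auto)
  have "form G n e e \<noteq> 0"
  proof (cases "G = Hyp")
    case True
    have "form G n e (V r0) = 0" using P hyp True unfolding orth_proj_def e_def by blast
    moreover have "form Hyp n (V r0) (V r0) < 0" using hyp True by simp
    moreover have "inV (Suc n) e" using eiv True by (simp add: amb_def)
    ultimately show ?thesis using form_Hyp_orth_timelike[of n "V r0" e] True enz by auto
  next
    case False then show ?thesis using form_self_eq_0_imp[OF False eiv] enz by auto
  qed
  then show ?thesis using orth_proj_insert[OF finK P j(2)] e_def by simp
qed

lemma orth_proj_exists: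
  assumes fin: "finite J" and ind: "lin_indep J V" and iv: "\<And>s. s \<in> J \<Longrightarrow> inV (amb G n) (V s)"
    and hyp: "G = Hyp \<Longrightarrow> r0 \<in> J \<and> form G n (V r0) (V r0) < 0"
  shows "\<exists>Pr. orth_proj G n J V Pr"
proof -
  define K0 where "K0 = (if G = Hyp then {r0} else {})"
  have K0: "K0 \<subseteq> J" "G = Hyp \<Longrightarrow> r0 \<in> K0" using hyp K0_def by auto
  have start: "\<exists>Pr. orth_proj G n K0 V Pr"
  proof (cases "G = Hyp")
    case True
    have "\<exists>Pr. orth_proj G n (insert r0 {}) V Pr"
      by (rule orth_proj_insert[OF _ orth_proj_empty]) (use hyp True in auto)
    then show ?thesis using True K0_def by simp
  next
    case False then show ?thesis using orth_proj_empty K0_def by auto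
  qed
  have "\<exists>Pr. orth_proj G n (K0 \<union> K) V Pr" if "finite K" "K \<subseteq> J" for K
    using that
  proof (induction K rule: finite_induct)
    case empty then show ?case using start by simp
  next
    case (insert j K)
    then obtain Pr where P: "orth_proj G n (K0 \<union> K) V Pr" by auto
    show ?case
    proof (cases "j \<in> K0 \<union> K")
      case True then show ?thesis using P by (metis Un_insert_right insert_absorb)
    next
      case False
      have "\<exists>Pr'. orth_proj G n (insert j (K0 \<union> K)) V Pr'"
        by (rule orth_proj_extend[OF fin ind iv _ _ P _ False]) (use hyp K0 insert in auto)
      then show ?thesis by simp
    qed
  qed
  from this[of J] fin K0 show ?thesis by (simp add: Un_absorb1)
qed

definition reject :: "geom \<Rightarrow> nat \<Rightarrow> (nat \<Rightarrow> real) \<Rightarrow> (nat \<Rightarrow> real) \<Rightarrow> (nat \<Rightarrow> real)" where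
  "reject G n X Y = vsub X (vscale (form G n X Y / form G n Y Y) Y)"
definition unit_reject :: "geom \<Rightarrow> nat \<Rightarrow> (nat \<Rightarrow> real) \<Rightarrow> (nat \<Rightarrow> real) \<Rightarrow> (nat \<Rightarrow> real)" where
  "unit_reject G n X Y = vscale (1 / sqrt (form G n (reject G n X Y) (reject G n X Y))) (reject G n X Y)"

lemma reject_orth: "form G n Y Y \<noteq> 0 \<Longrightarrow> form G n (reject G n X Y) Y = 0"
  unfolding reject_def by (simp add: form_lin)
lemma form_reject_left: "form G n Y Y \<noteq> 0 \<Longrightarrow> form G n (reject G n X Y) X = form G n X X - (form G n X Y)^2 / form G n Y Y"
  unfolding reject_def by (simp add: form_lin form_sym[of G n Y X] power2_eq_square)
lemma form_reject_self: "form G n Y Y \<noteq> 0 \<Longrightarrow> form G n (reject G n X Y) (reject G n X Y) = form G n X X - (form G n X Y)^2 / form G n Y Y"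
proof -
  assume Y: "form G n Y Y \<noteq> 0"
  have "form G n (reject G n X Y) (reject G n X Y) = form G n (reject G n X Y) X - (form G n X Y / form G n Y Y) * form G n (reject G n X Y) Y"
    by (subst (2) reject_def) (simp add: form_lin)
  then show ?thesis using form_reject_left[OF Y] reject_orth[OF Y] by simp
qed

lemma unit_reject_orth: "form G n Y Y \<noteq> 0 \<Longrightarrow> form G n (unit_reject G n X Y) Y = 0"
  unfolding unit_reject_def by (simp add: form_lin reject_orth)
lemma unit_reject_unit: "form G n (reject G n X Y) (reject G n X Y) > 0 \<Longrightarrow> form G n (unit_reject G n X Y) (unit_reject G n X Y) = 1"
  unfolding unit_reject_def by (simp add: form_lin)
lemma form_unit_reject_left: "form G n Y Y \<noteq> 0 \<Longrightarrow> form G n (reject G n X Y) (reject G n X Y) > 0 \<Longrightarrow>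
    form G n (unit_reject G n X Y) X = sqrt (form G n (reject G n X Y) (reject G n X Y))"
proof -
  assume Y: "form G n Y Y \<noteq> 0" and R: "form G n (reject G n X Y) (reject G n X Y) > 0"
  have "form G n (unit_reject G n X Y) X = form G n (reject G n X Y) (reject G n X Y) / sqrt (form G n (reject G n X Y) (reject G n X Y))"
    unfolding unit_reject_def using form_reject_left[OF Y] form_reject_self[OF Y] by (simp add: form_lin)
  also have "\<dots> = sqrt (form G n (reject G n X Y) (reject G n X Y))" using R by (simp add: real_div_sqrt)
  finally show ?thesis .
qed

lemma form_unit_reject_pair:
  assumes X: "form G n X X > 0" and Y: "form G n Y Y > 0"
    and D: "(form G n X Y)^2 < form G n X X * form G n Y Y"
  shows "form G n (unit_reject G n X Y) (unit_reject G n Y X) = - form G n X Y / sqrt (form G n X X * form G n Y Y)"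
proof -
  let ?xx = "form G n X X" and ?yy = "form G n Y Y" and ?xy = "form G n X Y"
  have yx: "form G n Y X = ?xy" by (rule form_sym)
  have R1: "form G n (reject G n X Y) (reject G n X Y) = (?xx * ?yy - ?xy^2) / ?yy"
    using form_reject_self[of G n Y X] Y by (simp add: field_simps)
  have R2: "form G n (reject G n Y X) (reject G n Y X) = (?xx * ?yy - ?xy^2) / ?xx"
    using form_reject_self[of G n X Y] X yx by (simp add: field_simps)
  have RR: "form G n (reject G n X Y) (reject G n Y X) = - ?xy * (?xx * ?yy - ?xy^2) / (?xx * ?yy)"
    unfolding reject_def using X Y yx by (simp add: form_lin field_simps power2_eq_square)
  define D' where "D' = ?xx * ?yy - ?xy^2"
  have D'p: "D' > 0" using D D'_def by simp
  have s: "sqrt (D' / ?yy) * sqrt (D' / ?xx) = D' / sqrt (?xx * ?yy)"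
  proof -
    have "sqrt (D' / ?yy) * sqrt (D' / ?xx) = sqrt (D' * D' / (?xx * ?yy))"
      by (simp add: real_sqrt_mult[symmetric] field_simps)
    also have "\<dots> = D' / sqrt (?xx * ?yy)" using D'p X Y by (simp add: real_sqrt_divide)
    finally show ?thesis .
  qed
  have "form G n (unit_reject G n X Y) (unit_reject G n Y X) = form G n (reject G n X Y) (reject G n Y X) /
      (sqrt (form G n (reject G n X Y) (reject G n X Y)) * sqrt (form G n (reject G n Y X) (reject G n Y X)))"
    unfolding unit_reject_def by (simp add: form_lin)
  also have "\<dots> = (- ?xy * D' / (?xx * ?yy)) / (D' / sqrt (?xx * ?yy))"
    using R1 R2 RR s D'_def by simp
  also have "\<dots> = - ?xy / sqrt (?xx * ?yy)"
    using D'p X Y by (simp add: field_simps real_sqrt_mult)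
  finally show ?thesis .
qed

section \<open>A trigonometric identity\<close>

lemma quartic_trig_proportional:
  fixes al bpq bqp cg :: real
  assumes s1: "sin bpq \<noteq> 0" and s2: "sin bqp \<noteq> 0"
  defines "hpq \<equiv> (cos bpq * sin al - sin bpq * cos al) / sin bpq"
    and "hqp \<equiv> (cos bqp * sin al - sin bqp * cos al) / sin bqp"
    and "E \<equiv> (cg - (cos bpq * cos bqp * cos al + cos bpq * sin bqp * sin al + sin bpq * cos bqp * sin al
              - sin bpq * sin bqp * cos al)) / (2 * sin bpq * sin bqp)"
  shows "\<exists>\<kappa>::real. \<kappa> \<noteq> 0 \<and>
              (\<forall>tp tq :: real.
                 (cg - cos (al + bpq + bqp)) * tp\<^sup>2 * tq\<^sup>2 + (cg - cos (al + bpq - bqp)) * tp\<^sup>2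
                 + 2 * (- 2 * sin bpq * sin bqp) * tp * tq + (cg - cos (al + bqp - bpq)) * tq\<^sup>2
                 + (cg - cos (al - bpq - bqp))
                 = \<kappa> * ((hqp + hpq - 2 * (- cos al) + E) * tp\<^sup>2 * tq\<^sup>2 + (hqp + E) * tp\<^sup>2 - 2 * tp * tq
                     + (hpq + E) * tq\<^sup>2 + E))"
proof -
  let ?k = "2 * sin bpq * sin bqp"
  have k: "?k \<noteq> 0" using s1 s2 by simp
  have e1: "cg - cos (al + bpq + bqp) = ?k * (hqp + hpq - 2 * (- cos al) + E)"
    unfolding hpq_def hqp_def E_def using s1 s2
    by (simp add: cos_add sin_add cos_diff sin_diff field_simps; simp add: algebra_simps)
  have e2: "cg - cos (al + bpq - bqp) = ?k * (hqp + E)"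
    unfolding hpq_def hqp_def E_def using s1 s2
    by (simp add: cos_add sin_add cos_diff sin_diff field_simps; simp add: algebra_simps)
  have e3: "cg - cos (al + bqp - bpq) = ?k * (hpq + E)"
    unfolding hpq_def hqp_def E_def using s1 s2
    by (simp add: cos_add sin_add cos_diff sin_diff field_simps; simp add: algebra_simps)
  have e4: "cg - cos (al - bpq - bqp) = ?k * E"
    unfolding E_def using s1 s2
    by (simp add: cos_add sin_add cos_diff sin_diff field_simps; simp add: algebra_simps)
  show ?thesis
    by (rule exI[of _ ?k], intro conjI k allI, unfold e1 e2 e3 e4) (simp add: algebra_simps)
qed

lemma arccos_normalized:
  fixes x y z :: real
  assumes x: "x > 0" and y: "y > 0" and cs: "z^2 < x * y"
  defines "c \<equiv> z / sqrt (x * y)"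
  shows "\<bar>c\<bar> < 1" and "cos (arccos c) = c" and "sin (arccos c) = sqrt (1 - c^2)" and "sin (arccos c) > 0"
    and "z = sqrt x * sqrt y * c" and "sqrt (x - z^2 / y) = sqrt x * sin (arccos c)"
proof -
  have sxy: "sqrt (x * y) > 0" using x y by simp
  have c_sq: "c^2 = z^2 / (x * y)" unfolding c_def using x y by (simp add: power_divide)
  then have "c^2 < 1" using cs x y by simp
  then show ca: "\<bar>c\<bar> < 1" by (simp add: abs_square_less_1)
  show "cos (arccos c) = c" using ca by (simp add: cos_arccos_abs)
  show sa: "sin (arccos c) = sqrt (1 - c^2)" using ca by (simp add: sin_arccos_abs)
  show "sin (arccos c) > 0" using sa \<open>c^2 < 1\<close> by simp
  show "z = sqrt x * sqrt y * c" unfolding c_def using sxy x y by (simp add: real_sqrt_mult)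
  have "x - z^2 / y = x * (1 - c^2)" unfolding c_sq using x y by (simp add: field_simps)
  then show "sqrt (x - z^2 / y) = sqrt x * sin (arccos c)" using sa by (simp add: real_sqrt_mult)
qed

text \<open>Here g is the Gram matrix of (A_p, A_q, B_p, B_q), the components of a_p, a_q, b_p, b_q
  orthogonal to the ridge F_pq; the four dihedral angles at F_pq are the arccosines of its
  normalized entries.\<close>
lemma quartic_gram_proportional:
  fixes g11 g22 g12 g33 g32 g44 g41 g34 :: real
  assumes p1: "g11 > 0" and p2: "g22 > 0" and p3: "g33 > 0" and p4: "g44 > 0"
    and cs1: "g12^2 < g11 * g22" and cs2: "g32^2 < g33 * g22" and cs3: "g41^2 < g44 * g11" and cs4: "g34^2 < g33 * g44"
  assumes np_Ap_def: "np_Ap = sqrt (g11 - g12^2 / g22)" and nq_Aq_def: "nq_Aq = sqrt (g22 - g12^2 / g11)"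
    and np_nq_def: "np_nq = - g12 / sqrt (g11 * g22)"
    and betp_def: "betp = sqrt (g33 - g32^2 / g22)" and betq_def: "betq = sqrt (g44 - g41^2 / g11)"
    and kp_def: "kp = g32 / g22" and kq_def: "kq = g41 / g11"
    and E_def: "E = (g34 - (kp * kq * g12 + kp * betq * nq_Aq + betp * kq * np_Ap + betp * betq * np_nq)) / (2 * betp * betq)"
    and hpq_def: "hpq = (kp * nq_Aq + betp * np_nq) / betp" and hqp_def: "hqp = (kq * np_Ap + betq * np_nq) / betq"
    and al_def: "al = arccos (g12 / sqrt (g11 * g22))" and bpq_def: "bpq = arccos (g32 / sqrt (g33 * g22))"
    and bqp_def: "bqp = arccos (g41 / sqrt (g44 * g11))" and ga_def: "ga = arccos (g34 / sqrt (g33 * g44))"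
  shows "\<exists>\<kappa>::real. \<kappa> \<noteq> 0 \<and>
              (\<forall>tp tq :: real.
                 (cos ga - cos (al + bpq + bqp)) * tp\<^sup>2 * tq\<^sup>2 + (cos ga - cos (al + bpq - bqp)) * tp\<^sup>2
                 + 2 * (- 2 * sin bpq * sin bqp) * tp * tq + (cos ga - cos (al + bqp - bpq)) * tq\<^sup>2
                 + (cos ga - cos (al - bpq - bqp))
                 = \<kappa> * ((hqp + hpq - 2 * np_nq + E) * tp\<^sup>2 * tq\<^sup>2 + (hqp + E) * tp\<^sup>2 - 2 * tp * tq
                     + (hpq + E) * tq\<^sup>2 + E))"
proof -
  let ?A1 = "sqrt g11" and ?A2 = "sqrt g22" and ?U = "sqrt g33" and ?V = "sqrt g44"
  have P: "?A1 > 0" "?A2 > 0" "?U > 0" "?V > 0" using p1 p2 p3 p4 by auto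
  note A = arccos_normalized[OF p1 p2 cs1, folded al_def]
  note B1 = arccos_normalized[OF p3 p2 cs2, folded bpq_def]
  note B2 = arccos_normalized[OF p4 p1 cs3, folded bqp_def]
  note C = arccos_normalized[OF p3 p4 cs4, folded ga_def]
  have cs1': "g12^2 < g22 * g11" using cs1 by (simp add: mult.commute)
  note A' = arccos_normalized[OF p2 p1 cs1']
  have sa: "sqrt (g22 * g11) = sqrt (g11 * g22)" by (simp add: mult.commute)
  have n1: "np_Ap = ?A1 * sin al" unfolding np_Ap_def using A(6) .
  have n2: "nq_Aq = ?A2 * sin al" unfolding nq_Aq_def using A'(6) sa al_def by simp
  have n3: "np_nq = - cos al" unfolding np_nq_def using A(2) al_def by simp
  have n4: "betp = ?U * sin bpq" unfolding betp_def using B1(6) .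
  have n5: "betq = ?V * sin bqp" unfolding betq_def using B2(6) .
  have e12: "g12 = ?A1 * ?A2 * cos al" using A(5) A(2) by simp
  have eu2: "g32 = ?U * ?A2 * cos bpq" using B1(5) B1(2) by simp
  have ev1: "g41 = ?V * ?A1 * cos bqp" using B2(5) B2(2) by simp
  have euv: "g34 = ?U * ?V * cos ga" using C(5) C(2) by simp
  have sq: "?A1^2 = g11" "?A2^2 = g22" using p1 p2 by simp_all
  have n6: "kp = ?U * cos bpq / ?A2" unfolding kp_def eu2 using P sq by (simp add: power2_eq_square field_simps)
  have n7: "kq = ?V * cos bqp / ?A1" unfolding kq_def ev1 using P sq by (simp add: power2_eq_square field_simps)
  have sb: "sin bpq \<noteq> 0" "sin bqp \<noteq> 0" using B1(4) B2(4) by auto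
  have H1: "hpq = (cos bpq * sin al - sin bpq * cos al) / sin bpq"
    unfolding hpq_def n2 n3 n4 n6 using P sb by (simp add: field_simps)
  have H2: "hqp = (cos bqp * sin al - sin bqp * cos al) / sin bqp"
    unfolding hqp_def n1 n3 n5 n7 using P sb by (simp add: field_simps)
  have EE: "E = (cos ga - (cos bpq * cos bqp * cos al + cos bpq * sin bqp * sin al + sin bpq * cos bqp * sin al
              - sin bpq * sin bqp * cos al)) / (2 * sin bpq * sin bqp)"
    unfolding E_def n1 n2 n3 n4 n5 n6 n7 euv using P sb
    by (subst e12) (simp add: field_simps)
  show ?thesis unfolding H1 H2 EE n3 using quartic_trig_proportional[OF sb, where al=al and cg="cos ga"] by simp
qed

section \<open>Simplices through the ridge F_pq\<close>

text \<open>Position vectors relative to a_k in E^n; in S^n and Lambda^n the model is linear and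
  points are their own position vectors. The position vectors of a_s, s in ridge_idx, span the
  direction of F_pq, those for s in frame_idx the direction of Delta.\<close>
definition base_pt :: "geom \<Rightarrow> (nat \<Rightarrow> nat \<Rightarrow> real) \<Rightarrow> nat \<Rightarrow> (nat \<Rightarrow> real)" where
  "base_pt G a k = (if G = Euc then a k else (\<lambda>_. 0))"
definition shift :: "geom \<Rightarrow> (nat \<Rightarrow> nat \<Rightarrow> real) \<Rightarrow> nat \<Rightarrow> (nat \<Rightarrow> real) \<Rightarrow> (nat \<Rightarrow> real)" where
  "shift G a k x = vsub x (base_pt G a k)"
definition ridge_idx :: "geom \<Rightarrow> nat \<Rightarrow> nat \<Rightarrow> nat \<Rightarrow> nat \<Rightarrow> nat set" where
  "ridge_idx G n p q k = {..<n} - {p, q} - (if G = Euc then {k} else {})"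
definition frame_idx :: "geom \<Rightarrow> nat \<Rightarrow> nat \<Rightarrow> nat set" where
  "frame_idx G n k = {..<n} - (if G = Euc then {k} else {})"

lemma nondeg_lin_indep:
  assumes nd: "nondeg G n v" and k_lt: "k < n"
  shows "lin_indep (frame_idx G n k) (\<lambda>s. shift G v k (v s))"
  unfolding lin_indep_def
proof (intro allI impI ballI)
  fix c s assume lc: "lincomb (frame_idx G n k) c (\<lambda>s. shift G v k (v s)) = (\<lambda>_. 0)" and s: "s \<in> frame_idx G n k"
  show "c s = 0"
  proof (cases "G = Euc")
    case True
    have J: "frame_idx G n k = {..<n} - {k}" using True frame_idx_def by simp
    define c' where "c' = (\<lambda>t. if t = k then - (\<Sum>u\<in>frame_idx G n k. c u) else c t)"
    have split: "\<And>f. (\<Sum>t<n. f t) = f k + (\<Sum>t\<in>frame_idx G n k. f t)"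
      using k_lt J by (metis finite_lessThan lessThan_iff sum.remove)
    have "lincomb {..<n} c' v = (\<lambda>_. 0)"
    proof
      fix i
      have "lincomb {..<n} c' v i = - (\<Sum>u\<in>frame_idx G n k. c u) * v k i + (\<Sum>t\<in>frame_idx G n k. c t * v t i)"
        unfolding lincomb_def by (subst split) (auto simp: c'_def J intro!: sum.cong)
      also have "\<dots> = (\<Sum>t\<in>frame_idx G n k. c t * (v t i - v k i))"
        by (simp add: algebra_simps sum_subtractf sum_distrib_right sum_distrib_left)
      also have "\<dots> = 0" using fun_cong[OF lc, of i] True unfolding lincomb_def shift_def base_pt_def vsub_def by simp
      finally show "lincomb {..<n} c' v i = 0" .
    qed
    moreover have "(\<Sum>t<n. c' t) = 0" by (subst split) (auto simp: c'_def J intro!: sum.cong)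
    ultimately have "\<forall>t<n. c' t = 0" using nd True unfolding nondeg_def by blast
    moreover have "s < n" "s \<noteq> k" using s J by auto
    ultimately show ?thesis unfolding c'_def by auto
  next
    case False
    have "lincomb {..<n} c v = (\<lambda>_. 0)" using lc False by (simp add: shift_def base_pt_def frame_idx_def)
    then show ?thesis using nd s False unfolding nondeg_def frame_idx_def by auto
  qed
qed

text \<open>Pr is the orthogonal projection onto the direction of F_pq, so perp is the projection onto
  its orthogonal complement; it exists by Gram-Schmidt (see ridge_frame_exists).\<close>
locale ridge_frame =
  fixes G :: geom and n p q k :: nat and a b :: "nat \<Rightarrow> nat \<Rightarrow> real"
    and Pr :: "(nat \<Rightarrow> real) \<Rightarrow> (nat \<Rightarrow> real)"
  assumes n3: "n \<ge> 3" and pn: "p < n" and qn: "q < n" and pq: "p \<noteq> q"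
    and cross: "crossPolytope G n a b"
    and k_lt: "k < n" and k_ne_p: "k \<noteq> p" and k_ne_q: "k \<noteq> q"
    and Pr_orth_proj: "orth_proj G n (ridge_idx G n p q k) (\<lambda>s. shift G a k (a s)) Pr"
begin

abbreviation "pos \<equiv> shift G a k"
abbreviation "N \<equiv> amb G n"
abbreviation "ip \<equiv> form G n"
abbreviation "perp x \<equiv> vsub x (Pr x)"

definition through_ridge :: "(nat \<Rightarrow> nat \<Rightarrow> real) \<Rightarrow> bool" where
  "through_ridge v \<longleftrightarrow> (\<forall>s<n. s \<notin> {p, q} \<longrightarrow> v s = a s) \<and> nondeg G n v \<and> (\<forall>s<n. isPt G n (v s))"

lemma ridge_idx_swap: "ridge_idx G n q p k = ridge_idx G n p q k" unfolding ridge_idx_def by (simp add: insert_commute)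

lemma ridge_frame_swap: "ridge_frame G n q p k a b Pr"
  apply unfold_locales
  using n3 pn qn pq cross k_lt k_ne_p k_ne_q Pr_orth_proj ridge_idx_swap by simp_all

lemma finite_ridge_idx: "finite (ridge_idx G n p q k)" unfolding ridge_idx_def by (rule finite_Diff)+ simp

lemma pt_a: "s < n \<Longrightarrow> isPt G n (a s)" using cross unfolding crossPolytope_def by blast
lemma pt_b: "s < n \<Longrightarrow> isPt G n (b s)" using cross unfolding crossPolytope_def by blast
lemma inV_pt: "isPt G n x \<Longrightarrow> inV N x" unfolding isPt_def by simp
lemma inV_base_pt: "inV N (base_pt G a k)" using inV_pt[OF pt_a[OF k_lt]] by (cases "G = Euc") (simp_all add: base_pt_def inV_zero)
lemma inV_pos: "inV N x \<Longrightarrow> inV N (pos x)" unfolding shift_def by (rule inV_vsub[OF _ inV_base_pt])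
lemma pos_nonEuc: "G \<noteq> Euc \<Longrightarrow> pos x = x" unfolding shift_def base_pt_def by simp
lemma pos_a_k_Euc: "G = Euc \<Longrightarrow> pos (a k) = (\<lambda>_. 0)" unfolding shift_def base_pt_def vsub_def by simp
lemma ridge_idx_subset: "ridge_idx G n p q k \<subseteq> {..<n}" unfolding ridge_idx_def by auto
lemma finite_frame_idx: "finite (frame_idx G n k)" unfolding frame_idx_def by simp

lemma in_span_Pr: "in_span (ridge_idx G n p q k) (\<lambda>s. pos (a s)) (Pr x)" using Pr_orth_proj unfolding orth_proj_def by blast

lemma inV_Pr: "inV N (Pr x)"
  by (rule inV_in_span[OF _ in_span_Pr]) (use ridge_idx_subset inV_pt pt_a inV_pos in blast)

lemma inV_perp: "inV N x \<Longrightarrow> inV N (perp x)" by (rule inV_vsub[OF _ inV_Pr])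

lemma perp_orth_ridge: "t < n \<Longrightarrow> t \<notin> {p, q} \<Longrightarrow> ip (perp x) (pos (a t)) = 0"
proof -
  assume t: "t < n" "t \<notin> {p, q}"
  show ?thesis
  proof (cases "t \<in> ridge_idx G n p q k")
    case True then show ?thesis using Pr_orth_proj unfolding orth_proj_def by blast
  next
    case False then have "G = Euc" "t = k" using t unfolding ridge_idx_def by (auto split: if_splits)
    then show ?thesis using pos_a_k_Euc by simp
  qed
qed

definition orth_ridge :: "(nat \<Rightarrow> real) \<Rightarrow> bool" where
  "orth_ridge z \<longleftrightarrow> (\<forall>t<n. t \<notin> {p, q} \<longrightarrow> ip z (pos (a t)) = 0)"

lemma orth_ridge_perp: "orth_ridge (perp x)" unfolding orth_ridge_def using perp_orth_ridge by blast

lemma orth_ridge_lin: "orth_ridge x \<Longrightarrow> orth_ridge y \<Longrightarrow> orth_ridge (vsub x y)" "orth_ridge x \<Longrightarrow> orth_ridge y \<Longrightarrow> orth_ridge (vadd x y)"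
  "orth_ridge x \<Longrightarrow> orth_ridge (vscale c x)"
  unfolding orth_ridge_def by (simp_all add: form_lin)

lemma orth_ridge_Pr: "orth_ridge z \<Longrightarrow> ip z (Pr y) = 0"
  by (rule form_orth_span[OF finite_ridge_idx _ in_span_Pr]) (use ridge_idx_subset orth_ridge_def ridge_idx_def in auto)

text \<open>In Lambda^n the vector a_k is timelike, so its orthogonal complement is positive definite.\<close>
lemma orth_a_k_form_nonneg:
  assumes iv: "inV N z" and zk: "ip z (pos (a k)) = 0"
  shows "ip z z \<ge> 0" and "ip z z = 0 \<Longrightarrow> z = (\<lambda>_. 0)"
proof -
  have "ip z z \<ge> 0 \<and> (ip z z = 0 \<longrightarrow> z = (\<lambda>_. 0))"
  proof (cases "G = Hyp")
    case True
    have "form Hyp n (a k) (a k) = -1" using pt_a[OF k_lt] True by (simp add: isPt_Hyp)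
    moreover have "form Hyp n z (a k) = 0" using zk True pos_nonEuc by simp
    moreover have "inV (Suc n) z" using iv True by (simp add: amb_def)
    ultimately show ?thesis using form_Hyp_orth_timelike[of n "a k" z] True by auto
  next
    case False then show ?thesis using form_self_nonneg form_self_eq_0_imp iv by blast
  qed
  then show "ip z z \<ge> 0" and "ip z z = 0 \<Longrightarrow> z = (\<lambda>_. 0)" by auto
qed

lemma orth_ridge_form_nonneg: assumes iv: "inV N z" and W: "orth_ridge z"
  shows "ip z z \<ge> 0" and "ip z z = 0 \<Longrightarrow> z = (\<lambda>_. 0)"
  using orth_a_k_form_nonneg[OF iv] W k_lt k_ne_p k_ne_q unfolding orth_ridge_def by auto

lemma orth_ridge_form_pos: "inV N z \<Longrightarrow> orth_ridge z \<Longrightarrow> z \<noteq> (\<lambda>_. 0) \<Longrightarrow> ip z z > 0"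
  using orth_ridge_form_nonneg by (metis order_le_less)

lemma nondeg_facets: "nondeg G n (\<lambda>i. if c i then b i else a i)" using cross unfolding crossPolytope_def by blast

lemma through_ridge_a: "through_ridge a"
  using nondeg_facets[of "\<lambda>_. False"] pt_a unfolding through_ridge_def by simp
lemma through_ridge_facetP_p: "through_ridge (facetP a b p)"
proof -
  have "facetP a b p = (\<lambda>i. if i = p then b i else a i)" unfolding facetP_def by (auto simp: fun_eq_iff)
  then show ?thesis using nondeg_facets[of "\<lambda>i. i = p"] pt_a pt_b unfolding through_ridge_def by auto
qed
lemma through_ridge_facetPQ: "through_ridge (facetPQ a b p q)"
proof -
  have "facetPQ a b p q = (\<lambda>i. if i = p \<or> i = q then b i else a i)" unfolding facetPQ_def by (auto simp: fun_eq_iff)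
  then show ?thesis using nondeg_facets[of "\<lambda>i. i = p \<or> i = q"] pt_a pt_b unfolding through_ridge_def by auto
qed

lemma through_ridge_k: "through_ridge v \<Longrightarrow> v k = a k" using k_lt k_ne_p k_ne_q unfolding through_ridge_def by auto
lemma through_ridge_off: "through_ridge v \<Longrightarrow> s < n \<Longrightarrow> s \<notin> {p,q} \<Longrightarrow> v s = a s" unfolding through_ridge_def by auto
lemma through_ridge_pt: "through_ridge v \<Longrightarrow> s < n \<Longrightarrow> isPt G n (v s)" unfolding through_ridge_def by auto
lemma through_ridge_inV: "through_ridge v \<Longrightarrow> s < n \<Longrightarrow> inV N (pos (v s))" using through_ridge_pt inV_pt inV_pos by blast

lemma through_ridge_lin_indep: assumes v: "through_ridge v" shows "lin_indep (frame_idx G n k) (\<lambda>s. pos (v s))"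
proof -
  have nd: "nondeg G n v" using v unfolding through_ridge_def by blast
  have "shift G v k = pos" using through_ridge_k[OF v] unfolding shift_def base_pt_def by simp
  then show ?thesis using nondeg_lin_indep[OF nd k_lt] by simp
qed

lemma tangent_orth_vertices_zero: assumes v: "through_ridge v" and z: "in_span {..<n} (\<lambda>s. pos (v s)) z"
  and orth: "\<And>s. s < n \<Longrightarrow> ip z (pos (v s)) = 0"
  shows "z = (\<lambda>_. 0)"
proof (rule orth_a_k_form_nonneg(2))
  show "inV N z" by (rule inV_in_span[OF _ z]) (use through_ridge_inV[OF v] in auto)
  show "ip z (pos (a k)) = 0" using orth[OF k_lt] through_ridge_k[OF v] by simp
  show "ip z z = 0" by (rule form_orth_span[OF _ _ z]) (use orth in auto)
qed

lemma in_span_Pr_through_ridge: "through_ridge v \<Longrightarrow> finite I \<Longrightarrow> ridge_idx G n p q k \<subseteq> I \<Longrightarrow> in_span I (\<lambda>s. pos (v s)) (Pr x)"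
proof -
  assume v: "through_ridge v" and I: "finite I" "ridge_idx G n p q k \<subseteq> I"
  have "in_span (ridge_idx G n p q k) (\<lambda>s. pos (v s)) (Pr x)"
    using in_span_Pr in_span_cong[of "ridge_idx G n p q k" "\<lambda>s. pos (v s)" "\<lambda>s. pos (a s)"] through_ridge_off[OF v]
    unfolding ridge_idx_def by auto
  then show ?thesis by (rule in_span_mono[OF I(1) I(2)])
qed

lemma through_ridge_not_in_span: assumes v: "through_ridge v" and i: "i \<in> {p,q}"
  shows "\<not> in_span (frame_idx G n k - {i}) (\<lambda>s. pos (v s)) (pos (v i))"
  by (rule lin_indep_not_in_span[OF finite_frame_idx through_ridge_lin_indep[OF v]]) (use i pn qn k_ne_p k_ne_q in \<open>auto simp: frame_idx_def\<close>)

lemma ridge_idx_subset_frame_idx: "i \<in> {p,q} \<Longrightarrow> ridge_idx G n p q k \<subseteq> frame_idx G n k - {i}" unfolding ridge_idx_def frame_idx_def by auto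


section \<open>Unit normals and dihedral angles\<close>

lemma oth_lt: "oth i < n" using n3 unfolding oth_def by auto
lemma oth_ne: "oth i \<noteq> i" unfolding oth_def by auto

lemma inTan_iff_in_span: assumes v: "through_ridge v" shows "inTan G n v w \<longleftrightarrow> in_span {..<n} (\<lambda>s. pos (v s)) w"
proof (cases "G = Euc")
  case True
  have vk: "v k = a k" using through_ridge_k[OF v] .
  have lc: "\<And>c. lincomb {..<n} c (\<lambda>s. pos (v s)) = vsub (lincomb {..<n} c v) (vscale (\<Sum>s<n. c s) (a k))"
    using True unfolding lincomb_def vsub_def vscale_def shift_def base_pt_def
    by (simp add: fun_eq_iff sum_subtractf sum_distrib_right right_diff_distrib)
  show ?thesis
  proof
    assume "inTan G n v w"
    then obtain c where c: "w = lincomb {..<n} c v" "(\<Sum>s<n. c s) = 0" unfolding inTan_def using True by blast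
    then have "w = lincomb {..<n} c (\<lambda>s. pos (v s))" using lc[of c] by (simp add: vscale_def)
    then show "in_span {..<n} (\<lambda>s. pos (v s)) w" unfolding in_span_def by blast
  next
    assume "in_span {..<n} (\<lambda>s. pos (v s)) w"
    then obtain c where c: "w = lincomb {..<n} c (\<lambda>s. pos (v s))" unfolding in_span_def by blast
    define c' where "c' = (\<lambda>s. c s + (if s = k then - (\<Sum>t<n. c t) else 0))"
    have "lincomb {..<n} c' v = vsub (lincomb {..<n} c v) (vscale (\<Sum>s<n. c s) (a k))"
      unfolding lincomb_def vsub_def vscale_def c'_def using k_lt vk
      by (simp add: fun_eq_iff distrib_right sum.distrib if_distrib[of "\<lambda>x. x * _"] cong: if_cong)
    moreover have "(\<Sum>s<n. c' s) = 0" unfolding c'_def using k_lt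
      by (simp add: sum.distrib)
    ultimately show "inTan G n v w" unfolding inTan_def using c lc[of c] by metis
  qed
next
  case False then show ?thesis unfolding inTan_def in_span_def by (simp add: pos_nonEuc)
qed

lemma form_rel: "ip w (rel G x y) = ip w (pos x) - (if G = Euc then ip w (pos y) else 0)"
  unfolding rel_def shift_def base_pt_def by (auto simp: form_lin)

definition unit_normal :: "(nat \<Rightarrow> nat \<Rightarrow> real) \<Rightarrow> nat \<Rightarrow> (nat \<Rightarrow> real) \<Rightarrow> bool" where
  "unit_normal v i w \<longleftrightarrow> in_span {..<n} (\<lambda>s. pos (v s)) w \<and> ip w w = 1 \<and> (\<forall>s<n. s \<noteq> i \<longrightarrow> ip w (pos (v s)) = 0) \<and> ip w (pos (v i)) > 0"

lemma tangent_orth_facet_parallel: assumes v: "through_ridge v" and i: "i \<in> {p,q}" and w: "unit_normal v i w"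
  and z: "in_span {..<n} (\<lambda>s. pos (v s)) z" and orth: "\<And>s. s < n \<Longrightarrow> s \<noteq> i \<Longrightarrow> ip z (pos (v s)) = 0"
  shows "z = vscale (ip z (pos (v i)) / ip w (pos (v i))) w"
proof -
  let ?m = "ip z (pos (v i)) / ip w (pos (v i))"
  have bzp: "ip w (pos (v i)) > 0" using w unit_normal_def by blast
  define d where "d = vsub z (vscale ?m w)"
  have "d = (\<lambda>_. 0)"
  proof (rule tangent_orth_vertices_zero[OF v])
    show "in_span {..<n} (\<lambda>s. pos (v s)) d" unfolding d_def using z w unit_normal_def by (blast intro: in_span_sub in_span_scale)
    fix s assume s: "s < n"
    show "ip d (pos (v s)) = 0"
    proof (cases "s = i")
      case True then show ?thesis unfolding d_def using bzp by (simp add: form_lin)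
    next
      case False then show ?thesis unfolding d_def using orth[OF s False] w s unit_normal_def by (simp add: form_lin)
    qed
  qed
  then show ?thesis unfolding d_def vsub_def vscale_def by (auto simp: fun_eq_iff)
qed

lemma nrm_conditions_iff: assumes v: "through_ridge v" and i: "i \<in> {p,q}"
  shows "(inTan G n v w \<and> ip w w = 1 \<and> (\<forall>s<n. s \<noteq> i \<longrightarrow> ip w (rel G (v s) (v (oth i))) = 0) \<and>
          ip w (rel G (v i) (v (oth i))) > 0) \<longleftrightarrow> unit_normal v i w"
proof (cases "G = Euc")
  case False
  have r: "\<And>x y. ip w (rel G x y) = ip w (pos x)" using False form_rel by simp
  show ?thesis unfolding unit_normal_def inTan_iff_in_span[OF v] r ..
next
  case True
  have ki: "k \<noteq> i" "k < n" using i k_ne_p k_ne_q k_lt by auto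
  have r: "\<And>x y. ip w (rel G x y) = ip w (pos x) - ip w (pos y)" using True form_rel by simp
  have vk: "pos (v k) = (\<lambda>_. 0)" using pos_a_k_Euc[OF True] through_ridge_k[OF v] by simp
  have ot: "oth i < n" "oth i \<noteq> i" using oth_lt oth_ne by auto
  show ?thesis unfolding unit_normal_def inTan_iff_in_span[OF v] r
  proof
    assume h: "in_span {..<n} (\<lambda>s. pos (v s)) w \<and> ip w w = 1 \<and>
      (\<forall>s<n. s \<noteq> i \<longrightarrow> ip w (pos (v s)) - ip w (pos (v (oth i))) = 0) \<and> 0 < ip w (pos (v i)) - ip w (pos (v (oth i)))"
    then have "ip w (pos (v k)) - ip w (pos (v (oth i))) = 0" using ki by blast
    then have z: "ip w (pos (v (oth i))) = 0" using vk by simp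
    show "in_span {..<n} (\<lambda>s. pos (v s)) w \<and> ip w w = 1 \<and> (\<forall>s<n. s \<noteq> i \<longrightarrow> ip w (pos (v s)) = 0) \<and> 0 < ip w (pos (v i))"
      using h z by simp
  next
    assume h: "in_span {..<n} (\<lambda>s. pos (v s)) w \<and> ip w w = 1 \<and> (\<forall>s<n. s \<noteq> i \<longrightarrow> ip w (pos (v s)) = 0) \<and> 0 < ip w (pos (v i))"
    then have z: "ip w (pos (v (oth i))) = 0" using ot by blast
    show "in_span {..<n} (\<lambda>s. pos (v s)) w \<and> ip w w = 1 \<and>
      (\<forall>s<n. s \<noteq> i \<longrightarrow> ip w (pos (v s)) - ip w (pos (v (oth i))) = 0) \<and> 0 < ip w (pos (v i)) - ip w (pos (v (oth i)))"
      using h z by simp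
  qed
qed

lemma unit_normal_unique:
  assumes v: "through_ridge v" and i: "i \<in> {p,q}" and w1: "unit_normal v i w1" and w2: "unit_normal v i w2"
  shows "w1 = w2"
proof -
  let ?l = "ip w2 (pos (v i)) / ip w1 (pos (v i))"
  have p1: "ip w1 (pos (v i)) > 0" and p2: "ip w2 (pos (v i)) > 0" using w1 w2 unit_normal_def by auto
  have eq: "w2 = vscale ?l w1"
    by (rule tangent_orth_facet_parallel[OF v i w1]) (use w2 in \<open>auto simp: unit_normal_def\<close>)
  have "1 = ?l^2" using w1 w2 unfolding unit_normal_def
    by (subst (asm) (2) eq, subst (asm) (3) eq) (simp add: form_lin power2_eq_square)
  moreover have "?l > 0" using p1 p2 by simp
  ultimately have "?l = 1" by (metis abs_of_pos real_sqrt_abs real_sqrt_one)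
  then show ?thesis using eq unfolding vscale_def by simp
qed

lemma nrm_eqI: assumes v: "through_ridge v" and i: "i \<in> {p,q}" and w: "unit_normal v i w" shows "nrm G n v i = w"
  unfolding nrm_def
  by (rule the_equality) (use nrm_conditions_iff[OF v i] w unit_normal_unique[OF v i] in auto)

lemma inV_perp_vertex: "through_ridge v \<Longrightarrow> s < n \<Longrightarrow> inV N (perp (pos (v s)))" using inV_perp through_ridge_inV by blast

lemma orth_ridge_unit_reject: "orth_ridge X \<Longrightarrow> orth_ridge Y \<Longrightarrow> orth_ridge (unit_reject G n X Y)"
  unfolding unit_reject_def reject_def by (intro orth_ridge_lin)

lemma orth_ridge_reject: "orth_ridge X \<Longrightarrow> orth_ridge Y \<Longrightarrow> orth_ridge (reject G n X Y)"
  unfolding reject_def by (intro orth_ridge_lin)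

lemma pq_idx: "i \<in> {p,q} \<Longrightarrow> i < n \<and> i \<in> frame_idx G n k \<and> i \<noteq> k"
  using pn qn k_ne_p k_ne_q unfolding frame_idx_def by auto

lemma perp_vertex_pos: assumes v: "through_ridge v" and j: "j \<in> {p,q}" shows "ip (perp (pos (v j))) (perp (pos (v j))) > 0"
proof -
  have jj: "j < n" using pq_idx[OF j] by simp
  have "perp (pos (v j)) \<noteq> (\<lambda>_. 0)"
  proof
    assume "perp (pos (v j)) = (\<lambda>_. 0)"
    then have "pos (v j) = Pr (pos (v j))" unfolding vsub_def by (auto simp: fun_eq_iff)
    moreover have "in_span (frame_idx G n k - {j}) (\<lambda>s. pos (v s)) (Pr (pos (v j)))"
      by (rule in_span_Pr_through_ridge[OF v]) (use finite_frame_idx ridge_idx_subset_frame_idx[OF j] in auto)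
    ultimately show False using through_ridge_not_in_span[OF v j] by simp
  qed
  then show ?thesis using orth_ridge_form_pos[OF inV_perp_vertex[OF v jj] orth_ridge_perp] by simp
qed

lemma reject_perp_pos: assumes v: "through_ridge v" and i: "i \<in> {p,q}" and j: "j \<in> {p,q}" and ij: "i \<noteq> j"
  shows "ip (reject G n (perp (pos (v i))) (perp (pos (v j)))) (reject G n (perp (pos (v i))) (perp (pos (v j)))) > 0"
proof -
  let ?X = "perp (pos (v i))" and ?Y = "perp (pos (v j))"
  let ?R = "reject G n ?X ?Y"
  have ii: "i < n" and jj: "j < n" using pq_idx i j by auto
  have "?R \<noteq> (\<lambda>_. 0)"
  proof
    assume R0: "?R = (\<lambda>_. 0)"
    let ?kk = "ip ?X ?Y / ip ?Y ?Y"
    have pt: "\<And>x. ?X x - ?kk * ?Y x = 0" using R0 unfolding reject_def vsub_def vscale_def by (metis (mono_tags, lifting))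
    have eq: "pos (v i) = vadd (Pr (pos (v i))) (vscale ?kk (vsub (pos (v j)) (Pr (pos (v j)))))"
    proof
      fix x show "pos (v i) x = vadd (Pr (pos (v i))) (vscale ?kk (vsub (pos (v j)) (Pr (pos (v j))))) x"
        using pt[of x] unfolding vsub_def vadd_def vscale_def by argo
    qed
    have fin: "finite (frame_idx G n k - {i})" using finite_frame_idx by simp
    have s1: "in_span (frame_idx G n k - {i}) (\<lambda>s. pos (v s)) (Pr x)" for x
      by (rule in_span_Pr_through_ridge[OF v fin]) (use ridge_idx_subset_frame_idx[OF i] in auto)
    have s2: "in_span (frame_idx G n k - {i}) (\<lambda>s. pos (v s)) (pos (v j))"
      by (rule in_span_gen[OF fin]) (use pq_idx[OF j] ij in auto)
    have "in_span (frame_idx G n k - {i}) (\<lambda>s. pos (v s)) (pos (v i))"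
      by (subst eq) (intro in_span_add in_span_scale in_span_sub s1 s2)
    then show False using through_ridge_not_in_span[OF v i] by simp
  qed
  moreover have "inV N ?R" unfolding reject_def by (intro inV_vsub inV_vscale inV_perp_vertex[OF v ii] inV_perp_vertex[OF v jj])
  moreover have "orth_ridge ?R" by (intro orth_ridge_reject orth_ridge_perp)
  ultimately show ?thesis using orth_ridge_form_pos by blast
qed

lemma perp_Cauchy_Schwarz_strict: assumes v: "through_ridge v" and i: "i \<in> {p,q}" and j: "j \<in> {p,q}" and ij: "i \<noteq> j"
  shows "(ip (perp (pos (v i))) (perp (pos (v j))))^2 < ip (perp (pos (v i))) (perp (pos (v i))) * ip (perp (pos (v j))) (perp (pos (v j)))"
proof -
  have Y: "ip (perp (pos (v j))) (perp (pos (v j))) > 0" by (rule perp_vertex_pos[OF v j])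
  have "0 < ip (perp (pos (v i))) (perp (pos (v i))) - (ip (perp (pos (v i))) (perp (pos (v j))))^2 / ip (perp (pos (v j))) (perp (pos (v j)))"
    using reject_perp_pos[OF v i j ij] form_reject_self[of G n "perp (pos (v j))" "perp (pos (v i))"] Y by simp
  then show ?thesis using Y by (simp add: field_simps)
qed

lemma unit_normal_unit_reject: assumes v: "through_ridge v" and i: "i \<in> {p,q}" and j: "j \<in> {p,q}" and ij: "i \<noteq> j"
  shows "unit_normal v i (unit_reject G n (perp (pos (v i))) (perp (pos (v j))))"
proof -
  let ?X = "perp (pos (v i))" and ?Y = "perp (pos (v j))"
  let ?N = "unit_reject G n ?X ?Y"
  have Y: "ip ?Y ?Y > 0" by (rule perp_vertex_pos[OF v j])
  have R: "ip (reject G n ?X ?Y) (reject G n ?X ?Y) > 0" by (rule reject_perp_pos[OF v i j ij])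
  have W: "orth_ridge ?N" by (intro orth_ridge_unit_reject orth_ridge_perp)
  have ii: "i < n" and jj: "j < n" using pq_idx i j by auto
  have spPr: "in_span {..<n} (\<lambda>s. pos (v s)) (Pr x)" for x by (rule in_span_Pr_through_ridge[OF v]) (use ridge_idx_subset in auto)
  have sp: "in_span {..<n} (\<lambda>s. pos (v s)) ?N" unfolding unit_reject_def reject_def
    by (intro in_span_scale in_span_sub spPr in_span_gen) (use ii jj in auto)
  have N1: "ip ?N ?N = 1" by (rule unit_reject_unit[OF R])
  have orth: "ip ?N (pos (v s)) = 0" if s: "s < n" "s \<noteq> i" for s
  proof (cases "s = j")
    case True
    have "ip ?N ?Y = ip ?N (pos (v j)) - ip ?N (Pr (pos (v j)))" by (simp add: form_lin)
    then show ?thesis using unit_reject_orth[of G n ?Y ?X] Y orth_ridge_Pr[OF W] True by simp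
  next
    case False
    then have "s \<notin> {p,q}" using s i j ij by auto
    then show ?thesis using W s through_ridge_off[OF v s(1)] unfolding orth_ridge_def by simp
  qed
  have "ip ?N ?X = ip ?N (pos (v i)) - ip ?N (Pr (pos (v i)))" by (simp add: form_lin)
  then have "ip ?N (pos (v i)) = sqrt (ip (reject G n ?X ?Y) (reject G n ?X ?Y))"
    using form_unit_reject_left[of G n ?Y ?X] Y R orth_ridge_Pr[OF W] by simp
  then have N_pos: "ip ?N (pos (v i)) > 0" using R by simp
  show ?thesis unfolding unit_normal_def using sp N1 orth N_pos by blast
qed

lemma nrm_eq_unit_reject: assumes v: "through_ridge v" and i: "i \<in> {p,q}" and j: "j \<in> {p,q}" and ij: "i \<noteq> j"
  shows "nrm G n v i = unit_reject G n (perp (pos (v i))) (perp (pos (v j)))"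
  by (rule nrm_eqI[OF v i unit_normal_unit_reject[OF v i j ij]])

lemma dih_eq_arccos_perp: assumes v: "through_ridge v" and i: "i \<in> {p,q}" and j: "j \<in> {p,q}" and ij: "i \<noteq> j"
  shows "dih G n v i j = arccos (ip (perp (pos (v i))) (perp (pos (v j))) /
           sqrt (ip (perp (pos (v i))) (perp (pos (v i))) * ip (perp (pos (v j))) (perp (pos (v j)))))"
proof -
  have "ip (nrm G n v i) (nrm G n v j) = - ip (perp (pos (v i))) (perp (pos (v j))) /
           sqrt (ip (perp (pos (v i))) (perp (pos (v i))) * ip (perp (pos (v j))) (perp (pos (v j))))"
    unfolding nrm_eq_unit_reject[OF v i j ij] nrm_eq_unit_reject[OF v j i ij[symmetric]]
    by (rule form_unit_reject_pair[OF perp_vertex_pos[OF v i] perp_vertex_pos[OF v j] perp_Cauchy_Schwarz_strict[OF v i j ij]])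
  then show ?thesis unfolding dih_def by simp
qed

section \<open>The point b_p^0\<close>

lemma pos_Sph: "G = Sph \<Longrightarrow> pos z = z" by (rule pos_nonEuc) simp
lemma pos_Hyp: "G = Hyp \<Longrightarrow> pos z = z" by (rule pos_nonEuc) simp

lemma pos_vadd_base_pt: "pos (vadd (base_pt G a k) w) = w" unfolding shift_def vadd_def vsub_def by simp
lemma vadd_base_pt_pos: "vadd (base_pt G a k) (pos y) = y" unfolding shift_def vadd_def vsub_def by simp

lemma affine_comb_of_span: assumes I: "I \<subseteq> {..<n}" "G = Euc \<Longrightarrow> k \<in> I" and w: "in_span I (\<lambda>s. pos (a s)) w"
  shows "\<exists>c. vadd (base_pt G a k) w = lincomb I c a \<and> (G = Euc \<longrightarrow> (\<Sum>s\<in>I. c s) = 1)"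
proof -
  obtain c where c: "w = lincomb I c (\<lambda>s. pos (a s))" using w in_span_def by blast
  have fin: "finite I" using I finite_subset by blast
  show ?thesis
  proof (cases "G = Euc")
    case True
    define c' where "c' = (\<lambda>s. c s + (if s = k then 1 - (\<Sum>t\<in>I. c t) else 0))"
    have "vadd (base_pt G a k) w = lincomb I c' a"
      unfolding c c'_def lincomb_def vadd_def using True I fin
      by (simp add: fun_eq_iff shift_def base_pt_def vsub_def distrib_right sum.distrib if_distrib[of "\<lambda>x. x * _"]
          right_diff_distrib sum_subtractf sum_distrib_right cong: if_cong)
         (simp add: sum_distrib_right[symmetric] left_diff_distrib)
    moreover have "(\<Sum>s\<in>I. c' s) = 1" unfolding c'_def using I fin True by (simp add: sum.distrib)
    ultimately show ?thesis by blast
  next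
    case False
    then show ?thesis using c by (auto simp: base_pt_def shift_def vadd_def vsub_def lincomb_def)
  qed
qed

lemma span_of_affine_comb: assumes I: "finite I" and y: "y = lincomb I c a" and s: "G = Euc \<Longrightarrow> (\<Sum>s\<in>I. c s) = 1"
  shows "in_span I (\<lambda>s. pos (a s)) (pos y)"
proof (cases "G = Euc")
  case True
  have "pos y = lincomb I c (\<lambda>s. pos (a s))"
    unfolding y lincomb_def using True s[OF True]
    by (simp add: fun_eq_iff shift_def base_pt_def vsub_def right_diff_distrib sum_subtractf sum_distrib_right[symmetric])
  then show ?thesis unfolding in_span_def by blast
next
  case False then show ?thesis using y by (auto simp: in_span_def pos_nonEuc)
qed

lemma planeI_in_span: "y \<in> planeI G n a I \<Longrightarrow> finite I \<Longrightarrow> isPt G n y \<and> in_span I (\<lambda>s. pos (a s)) (pos y)"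
  unfolding planeI_def using span_of_affine_comb by blast

lemma planeI_intro: "I \<subseteq> {..<n} \<Longrightarrow> (G = Euc \<Longrightarrow> k \<in> I) \<Longrightarrow> in_span I (\<lambda>s. pos (a s)) w \<Longrightarrow> isPt G n (vadd (base_pt G a k) w)
  \<Longrightarrow> vadd (base_pt G a k) w \<in> planeI G n a I"
  unfolding planeI_def using affine_comb_of_span by blast

lemma vsub_pos: "vsub x y = vsub (pos x) (pos y)" unfolding shift_def vsub_def by (simp add: fun_eq_iff)

lemma gdist_Euc: "G = Euc \<Longrightarrow> gdist G n x y = sqrt (ip (pos x) (pos x) - 2 * ip (pos x) (pos y) + ip (pos y) (pos y))"
proof -
  assume E: "G = Euc"
  have "ip (vsub (pos x) (pos y)) (vsub (pos x) (pos y)) = ip (pos x) (pos x) - 2 * ip (pos x) (pos y) + ip (pos y) (pos y)"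
    by (simp add: form_lin form_sym[of G n "pos y" "pos x"])
  then show ?thesis unfolding gdist_def vsub_pos[of x y] using E by simp
qed

lemma gdist_eqI:
  assumes xx: "ip (pos x) (pos x) = ip (pos y) (pos y)" and xr: "ip (pos x) (pos r) = ip (pos y) (pos r)"
  shows "gdist G n x r = gdist G n y r"
proof (cases G)
  case Euc then show ?thesis using gdist_Euc xx xr by simp
next
  case Sph
  have "ip x r = ip y r" using xr by (simp only: pos_Sph[OF Sph])
  then show ?thesis by (simp add: gdist_def Sph)
next
  case Hyp
  have "ip x r = ip y r" using xr by (simp only: pos_Hyp[OF Hyp])
  then show ?thesis by (simp add: gdist_def Hyp)
qed

lemma gdist_eq_imp_form_eq:
  assumes x: "isPt G n x" and y: "isPt G n y" and r: "isPt G n r"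
    and E: "G = Euc \<Longrightarrow> ip (pos x) (pos x) = ip (pos y) (pos y)"
    and g: "gdist G n x r = gdist G n y r"
  shows "ip (pos x) (pos r) = ip (pos y) (pos r)"
proof (cases G)
  case Euc
  have "sqrt (ip (pos x) (pos x) - 2 * ip (pos x) (pos r) + ip (pos r) (pos r)) =
        sqrt (ip (pos y) (pos y) - 2 * ip (pos y) (pos r) + ip (pos r) (pos r))"
    using g gdist_Euc[OF Euc, of x r] gdist_Euc[OF Euc, of y r] by simp
  then have "ip (pos x) (pos x) - 2 * ip (pos x) (pos r) = ip (pos y) (pos y) - 2 * ip (pos y) (pos r)"
    by simp
  then show ?thesis using E[OF Euc] by simp
next
  case Sph
  have "cos (gdist Sph n x r) = cos (gdist Sph n y r)" using g Sph by simp
  then have "ip x r = ip y r" using x y r Sph by (simp add: cos_gdist_Sph)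
  then show ?thesis by (simp only: pos_Sph[OF Sph])
next
  case Hyp
  have "- ip x r = - ip y r"
    using cosh_gdist_Hyp[of n x r] cosh_gdist_Hyp[of n y r] x y r g Hyp by metis
  then have "ip x r = ip y r" by simp
  then show ?thesis by (simp only: pos_Hyp[OF Hyp])
qed


text \<open>B_p = kp A_q + altp, where altp is orthogonal to A_q and is the altitude vector of Delta_p,
  of length betp; the position vector bzp of b_p^0 replaces altp by betp n_p.\<close>
definition "Ap = perp (pos (a p))"
definition "Aq = perp (pos (a q))"
definition "Bp = perp (pos (b p))"
definition "kp = ip Bp Aq / ip Aq Aq"
definition "altp = reject G n Bp Aq"
definition "betp = sqrt (ip altp altp)"
definition "np = unit_reject G n Ap Aq"
definition "footp = vadd (Pr (pos (b p))) (vscale kp Aq)"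
definition "bzp = vadd footp (vscale betp np)"
definition "bzero_p = vadd (base_pt G a k) bzp"

lemma pq_mem: "p \<in> {p,q}" "q \<in> {p,q}" by auto

lemma facetP_same: "facetP a b p p = b p" and facetP_other: "facetP a b p q = a q"
  unfolding facetP_def using pq by auto

lemma Aq_pos: "ip Aq Aq > 0" unfolding Aq_def using perp_vertex_pos[OF through_ridge_a pq_mem(2)] .
lemma Ap_pos: "ip Ap Ap > 0" unfolding Ap_def using perp_vertex_pos[OF through_ridge_a pq_mem(1)] .
lemma altp_pos: "ip altp altp > 0"
  using reject_perp_pos[OF through_ridge_facetP_p pq_mem(1) pq_mem(2) pq] unfolding altp_def Bp_def Aq_def facetP_same facetP_other .
lemma betp_pos: "betp > 0" unfolding betp_def using altp_pos by simp
lemma betp_sq: "betp^2 = ip altp altp" unfolding betp_def using altp_pos by simp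
lemma nrm_p_eq: "nrm G n a p = np"
  unfolding np_def Ap_def Aq_def by (rule nrm_eq_unit_reject[OF through_ridge_a pq_mem(1) pq_mem(2) pq])
lemma unit_normal_np: "unit_normal a p np" unfolding np_def Ap_def Aq_def by (rule unit_normal_unit_reject[OF through_ridge_a pq_mem(1) pq_mem(2) pq])
lemma np_unit: "ip np np = 1" using unit_normal_np unit_normal_def by blast
lemma np_Aq: "ip np Aq = 0" unfolding np_def using unit_reject_orth Aq_pos by simp
lemma altp_Aq: "ip altp Aq = 0" unfolding altp_def using reject_orth Aq_pos by simp
lemma orth_ridge_Aq: "orth_ridge Aq" unfolding Aq_def by (rule orth_ridge_perp)
lemma orth_ridge_Ap: "orth_ridge Ap" unfolding Ap_def by (rule orth_ridge_perp)
lemma orth_ridge_Bp: "orth_ridge Bp" unfolding Bp_def by (rule orth_ridge_perp)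
lemma orth_ridge_np: "orth_ridge np" unfolding np_def by (intro orth_ridge_unit_reject orth_ridge_Ap orth_ridge_Aq)
lemma orth_ridge_altp: "orth_ridge altp" unfolding altp_def by (intro orth_ridge_reject orth_ridge_Bp orth_ridge_Aq)

lemma form_a_q_orth_ridge: "orth_ridge z \<Longrightarrow> ip z (pos (a q)) = ip z Aq"
proof -
  assume W: "orth_ridge z"
  have "ip z Aq = ip z (pos (a q)) - ip z (Pr (pos (a q)))" unfolding Aq_def by (simp add: form_lin)
  then show ?thesis using orth_ridge_Pr[OF W] by simp
qed

lemma orth_Fp: assumes s: "s < n" "s \<noteq> p"
  shows "ip altp (pos (a s)) = 0" and "ip np (pos (a s)) = 0"
proof -
  have "ip altp (pos (a s)) = 0 \<and> ip np (pos (a s)) = 0"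
  proof (cases "s = q")
    case True then show ?thesis using form_a_q_orth_ridge[OF orth_ridge_altp] form_a_q_orth_ridge[OF orth_ridge_np] altp_Aq np_Aq by simp
  next
    case False then show ?thesis using orth_ridge_altp orth_ridge_np s unfolding orth_ridge_def by auto
  qed
  then show "ip altp (pos (a s)) = 0" and "ip np (pos (a s)) = 0" by auto
qed

lemma pos_b_p_split: "pos (b p) = vadd footp altp"
  unfolding footp_def altp_def reject_def Bp_def kp_def vadd_def vsub_def vscale_def by (simp add: fun_eq_iff)

lemma footp_altp: "ip footp altp = 0"
  unfolding footp_def using orth_ridge_Pr[OF orth_ridge_altp] altp_Aq by (simp add: form_lin form_sym[of G n _ altp])
lemma footp_np: "ip footp np = 0"
  unfolding footp_def using orth_ridge_Pr[OF orth_ridge_np] np_Aq by (simp add: form_lin form_sym[of G n _ np])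

lemma bzp_self: "ip bzp bzp = ip (pos (b p)) (pos (b p))"
proof -
  have "ip bzp bzp = ip footp footp + betp^2"
    unfolding bzp_def using footp_np np_unit by (simp add: form_lin form_sym[of G n np footp] power2_eq_square)
  moreover have "ip (pos (b p)) (pos (b p)) = ip footp footp + ip altp altp"
    unfolding pos_b_p_split using footp_altp by (simp add: form_lin form_sym[of G n altp footp])
  ultimately show ?thesis using betp_sq by simp
qed

lemma bzp_form_vertex: "s < n \<Longrightarrow> s \<noteq> p \<Longrightarrow> ip bzp (pos (a s)) = ip (pos (b p)) (pos (a s))"
  unfolding bzp_def pos_b_p_split using orth_Fp by (simp add: form_lin)

lemma np_bzp: "ip np bzp = betp"
  unfolding bzp_def using footp_np np_unit by (simp add: form_lin form_sym[of G n np footp])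

lemma in_span_Pr_a: "ridge_idx G n p q k \<subseteq> I \<Longrightarrow> finite I \<Longrightarrow> in_span I (\<lambda>s. pos (a s)) (Pr x)"
  using in_span_Pr_through_ridge[OF through_ridge_a] by blast

lemma footp_in_span: "in_span ({..<n} - {p}) (\<lambda>s. pos (a s)) footp"
proof -
  have ridge_idx: "ridge_idx G n p q k \<subseteq> {..<n} - {p}" unfolding ridge_idx_def by auto
  show ?thesis unfolding footp_def Aq_def
    by (intro in_span_add in_span_scale in_span_sub in_span_Pr_a[OF ridge_idx] in_span_gen) (use qn pq in auto)
qed

lemma bzp_in_span: "in_span {..<n} (\<lambda>s. pos (a s)) bzp"
proof -
  have "in_span {..<n} (\<lambda>s. pos (a s)) footp" by (rule in_span_mono[OF _ _ footp_in_span]) auto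
  moreover have "in_span {..<n} (\<lambda>s. pos (a s)) np" using unit_normal_np unit_normal_def by blast
  ultimately show ?thesis unfolding bzp_def by (intro in_span_add in_span_scale)
qed

lemma pos_bzero_p: "pos bzero_p = bzp" unfolding bzero_p_def by (rule pos_vadd_base_pt)

lemma inV_pos_a: "s < n \<Longrightarrow> inV N (pos (a s))" using through_ridge_inV[OF through_ridge_a] .

lemma inV_bzp: "inV N bzp"
  by (rule inV_in_span[OF _ bzp_in_span]) (use inV_pos_a in auto)
lemma inV_bzero_p: "inV N bzero_p" unfolding bzero_p_def by (intro inV_vadd inV_base_pt inV_bzp)

lemma bzero_p_nonEuc: "G \<noteq> Euc \<Longrightarrow> bzero_p = bzp" using pos_bzero_p pos_nonEuc by metis

lemma bzero_p_pt: "isPt G n bzero_p"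
proof (cases G)
  case Euc then show ?thesis using inV_bzero_p by (simp add: isPt_def)
next
  case Sph
  have "ip bzero_p bzero_p = ip (b p) (b p)" using bzp_self bzero_p_nonEuc[of] Sph pos_Sph[OF Sph] by simp
  also have "\<dots> = 1" using pt_b[OF pn] Sph by (simp add: isPt_def)
  finally show ?thesis using inV_bzero_p Sph by (simp add: isPt_def)
next
  case Hyp
  have yy: "ip bzero_p bzero_p = ip (b p) (b p)" using bzp_self bzero_p_nonEuc[of] Hyp pos_Hyp[OF Hyp] by simp
  also have "\<dots> = -1" using pt_b[OF pn] Hyp by (simp add: isPt_def)
  finally have y1: "ip bzero_p bzero_p = -1" .
  let ?r = "oth p"
  have r: "?r < n" "?r \<noteq> p" using oth_lt oth_ne by auto
  have "ip bzero_p (a ?r) = ip (b p) (a ?r)" using bzp_form_vertex[OF r] bzero_p_nonEuc Hyp pos_Hyp[OF Hyp] by simp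
  moreover have "form Hyp n (b p) (a ?r) \<le> -1" using form_Hyp_points_le pt_b[OF pn] pt_a[OF r(1)] Hyp by simp
  ultimately have neg: "form Hyp n bzero_p (a ?r) < 0" using Hyp by simp
  have "bzero_p n > 0" by (rule hyp_timelike_future[OF _ _ neg]) (use y1 Hyp pt_a[OF r(1)] in simp_all)
  then show ?thesis using inV_bzero_p y1 Hyp by (simp add: isPt_def)
qed

lemma form_np_rel: "ip np (rel G y (a (oth p))) = ip np (pos y)"
proof -
  have z: "ip np (pos (a (oth p))) = 0" using orth_Fp oth_lt oth_ne by blast
  show ?thesis unfolding form_rel z by simp
qed

lemma gdist_bzero_p: "r < n \<Longrightarrow> r \<noteq> p \<Longrightarrow> gdist G n bzero_p (a r) = gdist G n (b p) (a r)"
  by (rule gdist_eqI) (simp_all add: pos_bzero_p bzp_self bzp_form_vertex)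

lemma bzero_p_in_plane: "bzero_p \<in> planeI G n a {..<n}"
  unfolding bzero_p_def by (rule planeI_intro[OF _ _ bzp_in_span]) (use k_lt bzero_p_pt bzero_p_def in auto)

lemma form_pos_self_eq_if_gdist_a_k:
  assumes x: "isPt G n x" and y: "isPt G n y" and d: "gdist G n x (a k) = gdist G n y (a k)"
  shows "ip (pos x) (pos x) = ip (pos y) (pos y)"
proof (cases G)
  case Euc
  then show ?thesis using d gdist_Euc[OF Euc] pos_a_k_Euc[OF Euc] by simp
next
  case Sph
  have "ip x x = 1" "ip y y = 1" using x y Sph by (auto simp: isPt_def)
  then show ?thesis by (simp only: pos_Sph[OF Sph])
next
  case Hyp
  have "ip x x = -1" "ip y y = -1" using x y Hyp by (auto simp: isPt_def)
  then show ?thesis by (simp only: pos_Hyp[OF Hyp])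
qed

text \<open>A second candidate differs from b_p^0 by a multiple m of n_p (it satisfies the same linear
  conditions); equality of norms gives m (m + 2 beta_p) = 0, and the side condition excludes the
  reflected point m = -2 beta_p.\<close>
lemma bzero_p_unique:
  assumes y: "y \<in> planeI G n a {..<n}"
    and dist: "\<forall>r<n. r \<noteq> p \<longrightarrow> gdist G n y (a r) = gdist G n (b p) (a r)"
    and side: "0 < ip (nrm G n a p) (rel G y (a (oth p)))"
  shows "y = bzero_p"
proof -
  have yp: "isPt G n y" and ys: "in_span {..<n} (\<lambda>s. pos (a s)) (pos y)" using planeI_in_span y by auto
  have nn: "ip (pos y) (pos y) = ip (pos (b p)) (pos (b p))"
    by (rule form_pos_self_eq_if_gdist_a_k[OF yp pt_b[OF pn]]) (use dist k_lt k_ne_p in blast)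
  have orth: "ip (pos y) (pos (a s)) = ip (pos (b p)) (pos (a s))" if s: "s < n" "s \<noteq> p" for s
    by (rule gdist_eq_imp_form_eq[OF yp pt_b[OF pn] pt_a[OF s(1)]]) (use nn dist s in auto)
  define d where "d = vsub (pos y) bzp"
  have ds: "in_span {..<n} (\<lambda>s. pos (a s)) d" unfolding d_def using ys bzp_in_span by (rule in_span_sub)
  have dorth: "ip d (pos (a s)) = 0" if "s < n" "s \<noteq> p" for s
    unfolding d_def using orth[OF that] bzp_form_vertex[OF that] by (simp add: form_lin)
  define m where "m = ip d (pos (a p)) / ip np (pos (a p))"
  have "d = vscale m np"
    unfolding m_def by (rule tangent_orth_facet_parallel[OF through_ridge_a pq_mem(1) unit_normal_np ds dorth])
  then have syv: "pos y = vadd bzp (vscale m np)" unfolding d_def vsub_def vadd_def vscale_def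
    by (auto simp: fun_eq_iff) (metis add.commute diff_add_cancel)
  have "ip (pos y) (pos y) = ip bzp bzp + 2 * m * betp + m^2"
    unfolding syv using np_bzp np_unit by (simp add: form_lin form_sym[of G n bzp np] power2_eq_square algebra_simps)
  then have q: "m * (m + 2 * betp) = 0" using nn bzp_self by (simp add: algebra_simps power2_eq_square)
  have "ip np (pos y) > 0" using side nrm_p_eq form_np_rel by simp
  then have "betp + m > 0" unfolding syv using np_bzp np_unit by (simp add: form_lin)
  moreover have "m = 0 \<or> m + 2 * betp = 0" using q by simp
  ultimately have "m = 0" using betp_pos by linarith
  then have "pos y = bzp" using syv unfolding vadd_def vscale_def by simp
  then show "y = bzero_p" unfolding bzero_p_def by (metis vadd_base_pt_pos)
qed

lemma bzero_eq: "bzero G n a b p = bzero_p"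
  unfolding bzero_def
proof (rule the_equality)
  show "bzero_p \<in> planeI G n a {..<n} \<and> (\<forall>r<n. r \<noteq> p \<longrightarrow> gdist G n bzero_p (a r) = gdist G n (b p) (a r)) \<and>
        0 < ip (nrm G n a p) (rel G bzero_p (a (oth p)))"
    using bzero_p_in_plane gdist_bzero_p form_np_rel nrm_p_eq pos_bzero_p np_bzp betp_pos by simp
next
  fix y assume "y \<in> planeI G n a {..<n} \<and> (\<forall>r<n. r \<noteq> p \<longrightarrow> gdist G n y (a r) = gdist G n (b p) (a r)) \<and>
        0 < ip (nrm G n a p) (rel G y (a (oth p)))"
  then show "y = bzero_p" using bzero_p_unique by blast
qed

section \<open>The altitude beta_p\<close>

definition "plane_Fp = planeI G n a ({..<n} - {p})"
definition "alt_len = (case G of Euc \<Rightarrow> betp | Sph \<Rightarrow> arccos (sqrt (1 - betp^2)) | Hyp \<Rightarrow> arcosh (sqrt (1 + betp^2)))"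

lemma plane_Fp_facts: "y \<in> plane_Fp \<Longrightarrow> isPt G n y \<and> ip altp (pos y) = 0 \<and> ip (pos (b p)) (pos y) = ip footp (pos y)"
proof -
  assume y: "y \<in> plane_Fp"
  then have yp: "isPt G n y" and ys: "in_span ({..<n} - {p}) (\<lambda>s. pos (a s)) (pos y)"
    using planeI_in_span[of y "{..<n} - {p}"] unfolding plane_Fp_def by auto
  have r: "ip altp (pos y) = 0" by (rule form_orth_span[OF _ _ ys]) (use orth_Fp in auto)
  then show ?thesis using yp unfolding pos_b_p_split by (simp add: form_lin form_sym[of G n altp])
qed

lemma form_pos_b_p_self: "ip (pos (b p)) (pos (b p)) = ip footp footp + betp^2"
  unfolding pos_b_p_split using footp_altp betp_sq by (simp add: form_lin form_sym[of G n altp footp])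

lemma inV_footp: "inV N footp" by (rule inV_in_span[OF _ footp_in_span]) (use inV_pos_a in auto)

lemma form_pos_nonEuc: "G \<noteq> Euc \<Longrightarrow> ip (pos x) (pos y) = ip x y" using pos_nonEuc by simp

lemma footp_form_a_oth: "ip footp (pos (a (oth p))) = ip (pos (b p)) (pos (a (oth p)))"
  unfolding pos_b_p_split using orth_Fp(1)[OF oth_lt oth_ne] by (simp add: form_lin)

lemma vadd_base_pt_nonEuc: "G \<noteq> Euc \<Longrightarrow> vadd (base_pt G a k) w = w" unfolding base_pt_def vadd_def by simp

lemma plane_Fp_idx: "({..<n} - {p}) \<subseteq> {..<n}" "G = Euc \<Longrightarrow> k \<in> {..<n} - {p}" using k_lt k_ne_p by auto

lemma altitude_lower_bound_Euc:
  assumes Euc: "G = Euc" and y: "y \<in> plane_Fp" shows "alt_len \<le> gdist G n (b p) y"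
proof -
  have e: "vsub (pos (b p)) (pos y) = vadd altp (vsub footp (pos y))"
    unfolding pos_b_p_split vadd_def vsub_def by (simp add: fun_eq_iff)
  have h1: "ip altp (vsub footp (pos y)) = 0"
    using plane_Fp_facts[OF y] footp_altp by (simp add: form_lin form_sym[of G n altp footp])
  have "ip (vsub (b p) y) (vsub (b p) y) = ip altp altp + ip (vsub footp (pos y)) (vsub footp (pos y))"
    unfolding vsub_pos[of "b p" y] e
    by (simp only: form_add_l form_add_r form_sym[of G n "vsub footp (pos y)" altp] h1)
  moreover have "ip (vsub footp (pos y)) (vsub footp (pos y)) \<ge> 0" using form_self_nonneg Euc by simp
  ultimately have "sqrt (ip altp altp) \<le> sqrt (ip (vsub (b p) y) (vsub (b p) y))" by simp
  then show ?thesis using Euc unfolding alt_len_def gdist_def betp_def by simp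
qed

lemma altitude_attained_Euc: assumes Euc: "G = Euc" shows "\<exists>y\<in>plane_Fp. gdist G n (b p) y = alt_len"
proof -
  let ?y = "vadd (base_pt G a k) footp"
  have "inV N ?y" by (intro inV_vadd inV_base_pt inV_footp)
  then have "isPt G n ?y" unfolding isPt_def using Euc by simp
  then have yin: "?y \<in> plane_Fp"
    unfolding plane_Fp_def using planeI_intro[OF plane_Fp_idx footp_in_span] by blast
  have "vsub (pos (b p)) (pos ?y) = altp"
    unfolding pos_vadd_base_pt pos_b_p_split by (simp add: vadd_def vsub_def fun_eq_iff)
  then have "gdist G n (b p) ?y = alt_len"
    using Euc unfolding alt_len_def gdist_def betp_def vsub_pos[of "b p"] by simp
  then show ?thesis using yin by blast
qed

lemma form_footp_Sph: "G = Sph \<Longrightarrow> ip footp footp = 1 - betp^2"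
  using form_pos_b_p_self pt_b[OF pn] pos_nonEuc[of "b p"] by (simp add: isPt_def)

lemma alt_len_Sph: "G = Sph \<Longrightarrow> alt_len = arccos (sqrt (ip footp footp))"
  unfolding alt_len_def using form_footp_Sph by simp

lemma altitude_lower_bound_Sph:
  assumes Sph: "G = Sph" and y: "y \<in> plane_Fp" shows "alt_len \<le> gdist G n (b p) y"
proof -
  have bb: "ip (b p) (b p) = 1" using pt_b[OF pn] Sph by (simp add: isPt_def)
  have yy: "ip y y = 1" using plane_Fp_facts[OF y] Sph by (simp add: isPt_def)
  have e: "ip (b p) y = ip footp y" using plane_Fp_facts[OF y] pos_nonEuc Sph by auto
  have "ip footp y \<le> sqrt (ip footp footp)" using form_Cauchy_Schwarz[of G n footp y] yy Sph by simp
  moreover have "-1 \<le> ip (b p) y" using form_Sph_abs_le_1[of n "b p" y] bb yy Sph by simp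
  moreover have "sqrt (ip footp footp) \<le> 1" using form_footp_Sph[OF Sph] by simp
  ultimately have "arccos (sqrt (ip footp footp)) \<le> arccos (ip (b p) y)"
    using e by (intro arccos_le_arccos) simp_all
  then show ?thesis unfolding alt_len_Sph[OF Sph] gdist_def using Sph by simp
qed

text \<open>The foot of the altitude is footp normalized; if footp = 0, any vertex of F_p will do.\<close>
lemma altitude_attained_Sph: assumes Sph: "G = Sph" shows "\<exists>y\<in>plane_Fp. gdist G n (b p) y = alt_len"
proof (cases "ip footp footp = 0")
  case True
  then have M: "footp = (\<lambda>_. 0)" using form_self_eq_0_imp[OF _ inV_footp] Sph by simp
  let ?y = "a (oth p)"
  have yin: "?y \<in> plane_Fp" unfolding plane_Fp_def
    using planeI_intro[OF plane_Fp_idx in_span_gen[of "{..<n} - {p}" "oth p" "\<lambda>s. pos (a s)"]] oth_lt[of p] oth_ne[of p]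
      pt_a[OF oth_lt] pos_nonEuc vadd_base_pt_nonEuc Sph by simp
  have "ip (b p) ?y = 0" using footp_form_a_oth M pos_nonEuc Sph by simp
  then have "gdist G n (b p) ?y = alt_len" unfolding alt_len_Sph[OF Sph] True gdist_def using Sph by simp
  then show ?thesis using yin by blast
next
  case False
  then have Mpos: "ip footp footp > 0" using form_self_nonneg[of G n footp] Sph by simp
  let ?y = "vscale (1 / sqrt (ip footp footp)) footp"
  have ypt: "isPt G n ?y" using Mpos inV_footp inV_vscale Sph by (simp add: isPt_def form_lin)
  have yin: "?y \<in> plane_Fp" unfolding plane_Fp_def
    using planeI_intro[OF plane_Fp_idx in_span_scale[OF footp_in_span]] ypt vadd_base_pt_nonEuc Sph by simp
  have "ip (b p) ?y = ip footp ?y" using plane_Fp_facts[OF yin] pos_nonEuc Sph by auto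
  also have "\<dots> = sqrt (ip footp footp)" using Mpos by (simp add: form_lin real_div_sqrt)
  finally have "gdist G n (b p) ?y = alt_len" unfolding alt_len_Sph[OF Sph] gdist_def using Sph by simp
  then show ?thesis using yin by blast
qed

lemma form_footp_Hyp: "G = Hyp \<Longrightarrow> ip footp footp = -1 - betp^2"
  using form_pos_b_p_self pt_b[OF pn] pos_nonEuc[of "b p"] by (simp add: isPt_def)

lemma footp_timelike_future: assumes Hyp: "G = Hyp" shows "form Hyp n footp footp < 0" and "footp n > 0"
proof -
  show neg: "form Hyp n footp footp < 0"
    using form_footp_Hyp Hyp by (simp add: add_pos_nonneg) (smt (verit) zero_le_power2)
  have "ip footp (a (oth p)) = ip (b p) (a (oth p))" using footp_form_a_oth pos_nonEuc Hyp by simp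
  moreover have "form Hyp n (b p) (a (oth p)) \<le> -1" using form_Hyp_points_le pt_b[OF pn] pt_a[OF oth_lt] Hyp by simp
  ultimately have "form Hyp n footp (a (oth p)) < 0" using Hyp by simp
  moreover have "isPt Hyp n (a (oth p))" using pt_a[OF oth_lt] Hyp by simp
  ultimately show "footp n > 0" using hyp_timelike_future[OF neg] by blast
qed

lemma alt_len_Hyp: "G = Hyp \<Longrightarrow> alt_len = arcosh (sqrt (- ip footp footp))"
  unfolding alt_len_def using form_footp_Hyp by (simp add: add.commute)

lemma altitude_lower_bound_Hyp:
  assumes Hyp: "G = Hyp" and y: "y \<in> plane_Fp" shows "alt_len \<le> gdist G n (b p) y"
proof -
  have yp: "isPt Hyp n y" and e: "ip (b p) y = ip footp y"
    using plane_Fp_facts[OF y] pos_nonEuc Hyp by auto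
  have "sqrt (- ip footp footp) \<le> - ip (b p) y"
    using form_Hyp_reverse_Cauchy_Schwarz[OF footp_timelike_future[OF Hyp] yp] e Hyp by simp
  moreover have "1 \<le> sqrt (- ip footp footp)" using form_footp_Hyp[OF Hyp] by simp
  ultimately have "arcosh (sqrt (- ip footp footp)) \<le> arcosh (- ip (b p) y)" using arcosh_mono by blast
  then show ?thesis unfolding alt_len_Hyp[OF Hyp] gdist_def using Hyp by simp
qed

lemma altitude_attained_Hyp: assumes Hyp: "G = Hyp" shows "\<exists>y\<in>plane_Fp. gdist G n (b p) y = alt_len"
proof -
  let ?k = "sqrt (- ip footp footp)"
  let ?y = "vscale (1 / ?k) footp"
  note M = footp_timelike_future[OF Hyp]
  have kp: "?k > 0" using M Hyp by simp
  have "ip ?y ?y = ip footp footp / ?k^2" by (simp add: form_lin power2_eq_square)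
  also have "\<dots> = -1" using M Hyp by simp
  finally have "isPt G n ?y"
    unfolding isPt_def using inV_vscale[OF inV_footp, of "1 / ?k"] kp M Hyp by (simp add: vscale_def)
  then have yin: "?y \<in> plane_Fp" unfolding plane_Fp_def
    using planeI_intro[OF plane_Fp_idx in_span_scale[OF footp_in_span]] vadd_base_pt_nonEuc Hyp by simp
  have "ip (b p) ?y = ip footp ?y" using plane_Fp_facts[OF yin] pos_nonEuc Hyp by auto
  also have "\<dots> = ip footp footp / ?k" by (simp add: form_lin)
  also have "\<dots> = - ?k"
  proof -
    have "(- ip footp footp) / ?k = ?k" using M Hyp by (intro real_div_sqrt) simp
    then show ?thesis by (metis minus_divide_left minus_minus)
  qed
  finally have "gdist G n (b p) ?y = alt_len" unfolding alt_len_Hyp[OF Hyp] gdist_def using Hyp by simp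
  then show ?thesis using yin by blast
qed

lemma altitude_is_min: "(\<forall>y\<in>plane_Fp. alt_len \<le> gdist G n (b p) y) \<and> (\<exists>y\<in>plane_Fp. gdist G n (b p) y = alt_len)"
proof (cases G)
  case Euc then show ?thesis using altitude_lower_bound_Euc altitude_attained_Euc by blast
next
  case Sph then show ?thesis using altitude_lower_bound_Sph altitude_attained_Sph by blast
next
  case Hyp then show ?thesis using altitude_lower_bound_Hyp altitude_attained_Hyp by blast
qed

lemma altitude_eq: "altitude G n a b p = alt_len"
proof -
  obtain y where y: "y \<in> plane_Fp" "gdist G n (b p) y = alt_len" using altitude_is_min by blast
  have "alt_len \<in> gdist G n (b p) ` plane_Fp" using y by (metis image_eqI)
  then show ?thesis unfolding altitude_def plane_Fp_def[symmetric]
    using altitude_is_min by (intro cInf_eq_minimum) auto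
qed

lemma betaP_p_eq: "betaP G n a b p = betp"
proof (cases G)
  case Euc then show ?thesis unfolding betaP_def altitude_eq alt_len_def by simp
next
  case Sph
  have "\<bar>sqrt (1 - betp^2)\<bar> \<le> 1" "1 - betp^2 \<ge> 0"
  proof -
    have "ip footp footp \<ge> 0" using form_self_nonneg Sph by simp
    moreover have "ip footp footp = 1 - betp^2"
      using form_pos_b_p_self form_pos_nonEuc[of "b p" "b p"] pt_b[OF pn] Sph by (simp add: isPt_def)
    ultimately show "1 - betp^2 \<ge> 0" by simp
    then show "\<bar>sqrt (1 - betp^2)\<bar> \<le> 1" by simp
  qed
  then have "sin (arccos (sqrt (1 - betp^2))) = betp" using betp_pos by (simp add: sin_arccos_abs)
  then show ?thesis unfolding betaP_def altitude_eq alt_len_def using Sph by simp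
next
  case Hyp
  have "sinh (arcosh (sqrt (1 + betp^2))) = betp" using betp_pos by (simp add: sinh_arcosh_real)
  then show ?thesis unfolding betaP_def altitude_eq alt_len_def using Hyp by simp
qed

section \<open>The coefficients h_pq, g_pq and E_pq\<close>

definition "Yp = vadd (vscale kp Aq) (vscale betp np)"

lemma bzp_split: "bzp = vadd (Pr (pos (b p))) Yp"
  unfolding bzp_def footp_def Yp_def vadd_def by (simp add: fun_eq_iff)
lemma pos_b_p_perp_split: "pos (b p) = vadd (Pr (pos (b p))) Bp"
  unfolding Bp_def vadd_def vsub_def by (simp add: fun_eq_iff)
lemma orth_ridge_Yp: "orth_ridge Yp" unfolding Yp_def by (intro orth_ridge_lin orth_ridge_Aq orth_ridge_np)

interpretation sw: ridge_frame G n q p k a b Pr by (rule ridge_frame_swap)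

abbreviation "Bq \<equiv> sw.Bp"
abbreviation "kq \<equiv> sw.kp"
abbreviation "betq \<equiv> sw.betp"
abbreviation "nq \<equiv> sw.np"
abbreviation "bzq \<equiv> sw.bzp"
abbreviation "bzero_q \<equiv> sw.bzero_p"

lemma swap_Ap: "sw.Ap = Aq" unfolding sw.Ap_def Aq_def ..
lemma swap_Aq: "sw.Aq = Ap" unfolding sw.Aq_def Ap_def ..
lemma orth_ridge_swap: "sw.orth_ridge = orth_ridge"
  unfolding sw.orth_ridge_def orth_ridge_def by (auto simp: insert_commute fun_eq_iff)

lemma orth_ridge_nq: "orth_ridge nq" using sw.orth_ridge_np orth_ridge_swap by simp
lemma nrm_q_eq: "nrm G n a q = nq" using sw.nrm_p_eq .
lemma bzero_q_eq: "bzero G n a b q = bzero_q" using sw.bzero_eq .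
lemma betaP_q_eq: "betaP G n a b q = betq" using sw.betaP_p_eq .
lemma nq_orth_Fq: "s < n \<Longrightarrow> s \<noteq> q \<Longrightarrow> ip nq (pos (a s)) = 0" using sw.orth_Fp(2) .

abbreviation "Yq \<equiv> sw.Yp"

lemma orth_ridge_Yq: "orth_ridge Yq" using sw.orth_ridge_Yp orth_ridge_swap by simp
lemma orth_ridge_Bq: "orth_ridge Bq" using sw.orth_ridge_Bp orth_ridge_swap by simp
lemma bzq_split: "bzq = vadd (Pr (pos (b q))) Yq" using sw.bzp_split .
lemma pos_b_q_perp_split: "pos (b q) = vadd (Pr (pos (b q))) Bq" using sw.pos_b_p_perp_split .

lemma form_Pr_orth_ridge_add: "orth_ridge U \<Longrightarrow> orth_ridge V \<Longrightarrow> ip (vadd (Pr x) U) (vadd (Pr y) V) = ip (Pr x) (Pr y) + ip U V"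
proof -
  assume U: "orth_ridge U" and V: "orth_ridge V"
  have "ip U (Pr y) = 0" "ip V (Pr x) = 0" using orth_ridge_Pr U V by auto
  then show ?thesis by (simp add: form_lin form_sym[of G n "Pr x" V])
qed

lemma form_b_diff_eq: "ip (pos (b p)) (pos (b q)) - ip bzp bzq = ip Bp Bq - ip Yp Yq"
proof -
  have "ip (pos (b p)) (pos (b q)) = ip (vadd (Pr (pos (b p))) Bp) (vadd (Pr (pos (b q))) Bq)"
    by (simp only: pos_b_p_perp_split[symmetric] pos_b_q_perp_split[symmetric])
  also have "\<dots> = ip (Pr (pos (b p))) (Pr (pos (b q))) + ip Bp Bq" by (rule form_Pr_orth_ridge_add[OF orth_ridge_Bp orth_ridge_Bq])
  finally have 1: "ip (pos (b p)) (pos (b q)) = ip (Pr (pos (b p))) (Pr (pos (b q))) + ip Bp Bq" .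
  have 2: "ip bzp bzq = ip (Pr (pos (b p))) (Pr (pos (b q))) + ip Yp Yq"
    unfolding bzp_split bzq_split by (rule form_Pr_orth_ridge_add[OF orth_ridge_Yp orth_ridge_Yq])
  show ?thesis using 1 2 by simp
qed

lemma hH_pq_eq: "hH G n a b p q = ip nq bzp / betp"
proof -
  have z: "ip nq (pos (a (oth q))) = 0" using nq_orth_Fq oth_lt oth_ne by blast
  have "form G n (rel G bzero_p (a (oth q))) nq = ip nq (pos bzero_p)"
    unfolding form_sym[of G n _ nq] form_rel z by simp
  then show ?thesis unfolding hH_def bzero_eq nrm_q_eq betaP_p_eq pos_bzero_p by simp
qed

lemma hH_pq_gram: "hH G n a b p q = (kp * ip nq Aq + betp * ip np nq) / betp"
proof -
  have "ip nq bzp = kp * ip nq Aq + betp * ip nq np"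
    unfolding bzp_split Yp_def using orth_ridge_Pr[OF orth_ridge_nq] by (simp add: form_lin)
  then show ?thesis using hH_pq_eq form_sym[of G n nq np] by simp
qed

lemma points_b_bzero: "isPt G n (b p)" "isPt G n (b q)" "isPt G n bzero_p" "isPt G n bzero_q"
  using pt_b pn qn bzero_p_pt sw.bzero_p_pt by auto

lemma gdist_Euc_sq:
  "G = Euc \<Longrightarrow> (gdist G n x y)^2 = ip (pos x) (pos x) - 2 * ip (pos x) (pos y) + ip (pos y) (pos y)"
proof -
  assume E: "G = Euc"
  have "ip (vsub (pos x) (pos y)) (vsub (pos x) (pos y))
      = ip (pos x) (pos x) - 2 * ip (pos x) (pos y) + ip (pos y) (pos y)"
    by (simp add: form_lin form_sym[of G n "pos y" "pos x"])
  moreover have "ip (vsub (pos x) (pos y)) (vsub (pos x) (pos y)) \<ge> 0" using form_self_nonneg E by simp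
  ultimately show ?thesis using gdist_Euc[OF E] by simp
qed

lemma eE_bracket:
  "(case G of Euc \<Rightarrow> - (1/2) * (gdist G n (b p) (b q))\<^sup>2 + (1/2) * (gdist G n bzero_p bzero_q)\<^sup>2
      | Sph \<Rightarrow> cos (gdist G n (b p) (b q)) - cos (gdist G n bzero_p bzero_q)
      | Hyp \<Rightarrow> - cosh (gdist G n (b p) (b q)) + cosh (gdist G n bzero_p bzero_q))
   = ip (pos (b p)) (pos (b q)) - ip bzp bzq"
proof (cases G)
  case Euc
  then show ?thesis
    using gdist_Euc_sq[of "b p" "b q"] gdist_Euc_sq[of bzero_p bzero_q] bzp_self sw.bzp_self
      pos_bzero_p sw.pos_bzero_p
    by (simp add: algebra_simps)
next
  case Sph
  have "ip (pos (b p)) (pos (b q)) - ip bzp bzq = ip (b p) (b q) - ip bzero_p bzero_q"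
    using pos_bzero_p sw.pos_bzero_p by (simp only: pos_Sph[OF Sph])
  then show ?thesis using points_b_bzero Sph by (simp add: cos_gdist_Sph)
next
  case Hyp
  have "ip (pos (b p)) (pos (b q)) - ip bzp bzq = ip (b p) (b q) - ip bzero_p bzero_q"
    using pos_bzero_p sw.pos_bzero_p by (simp only: pos_Hyp[OF Hyp])
  then show ?thesis using points_b_bzero Hyp by (simp add: cosh_gdist_Hyp)
qed

lemma eE_gram: "eE G n a b p q = (ip Bp Bq - ip Yp Yq) / (2 * betp * betq)"
  unfolding eE_def Let_def bzero_eq bzero_q_eq betaP_p_eq betaP_q_eq eE_bracket form_b_diff_eq by simp

lemma facetPQ_simps: "facetPQ a b p q p = b p" "facetPQ a b p q q = b q"
  unfolding facetPQ_def using pq by auto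

lemma Bp_pos: "ip Bp Bp > 0"
  using perp_vertex_pos[OF through_ridge_facetP_p pq_mem(1)] unfolding Bp_def facetP_same .

lemma Cauchy_Schwarz_Ap_Aq: "(ip Ap Aq)^2 < ip Ap Ap * ip Aq Aq"
  unfolding Ap_def Aq_def by (rule perp_Cauchy_Schwarz_strict[OF through_ridge_a pq_mem pq])

lemma Cauchy_Schwarz_Bp_Aq: "(ip Bp Aq)^2 < ip Bp Bp * ip Aq Aq"
  using perp_Cauchy_Schwarz_strict[OF through_ridge_facetP_p pq_mem pq] unfolding Bp_def Aq_def facetP_same facetP_other .

lemma Cauchy_Schwarz_Bp_Bq: "(ip Bp Bq)^2 < ip Bp Bp * ip Bq Bq"
  using perp_Cauchy_Schwarz_strict[OF through_ridge_facetPQ pq_mem pq] facetPQ_simps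
  unfolding Bp_def ridge_frame.Bp_def[OF ridge_frame_swap] by simp

lemma dih_Delta: "dih G n a p q = arccos (ip Ap Aq / sqrt (ip Ap Ap * ip Aq Aq))"
  unfolding Ap_def Aq_def by (rule dih_eq_arccos_perp[OF through_ridge_a pq_mem pq])

lemma dih_facetP_p: "dih G n (facetP a b p) p q = arccos (ip Bp Aq / sqrt (ip Bp Bp * ip Aq Aq))"
  using dih_eq_arccos_perp[OF through_ridge_facetP_p pq_mem pq] unfolding Bp_def Aq_def facetP_same facetP_other .

lemma dih_facetPQ: "dih G n (facetPQ a b p q) p q = arccos (ip Bp Bq / sqrt (ip Bp Bp * ip Bq Bq))"
  using dih_eq_arccos_perp[OF through_ridge_facetPQ pq_mem pq] facetPQ_simps
  unfolding Bp_def ridge_frame.Bp_def[OF ridge_frame_swap] by simp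

lemma form_np_Ap: "ip np Ap = sqrt (ip Ap Ap - (ip Ap Aq)^2 / ip Aq Aq)"
  using form_unit_reject_left[of G n Aq Ap] form_reject_self[of G n Aq Ap] Aq_pos
    reject_perp_pos[OF through_ridge_a pq_mem pq, folded Ap_def Aq_def]
  unfolding np_def by simp

lemma form_np_nq: "ip np nq = - ip Ap Aq / sqrt (ip Ap Ap * ip Aq Aq)"
  unfolding np_def ridge_frame.np_def[OF ridge_frame_swap] swap_Ap swap_Aq
  by (rule form_unit_reject_pair[OF Ap_pos Aq_pos Cauchy_Schwarz_Ap_Aq])

lemma betp_gram: "betp = sqrt (ip Bp Bp - (ip Bp Aq)^2 / ip Aq Aq)"
  unfolding betp_def altp_def using form_reject_self Aq_pos by simp

lemma gG_eq: "gG G n a p q = ip np nq"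
  unfolding gG_def nrm_p_eq nrm_q_eq ..

lemma form_Yp_Yq:
  "ip Yp Yq = kp * kq * ip Ap Aq + kp * betq * ip nq Aq + betp * kq * ip np Ap + betp * betq * ip np nq"
  unfolding Yp_def ridge_frame.Yp_def[OF ridge_frame_swap] swap_Aq
  by (simp add: form_lin algebra_simps form_sym[of G n Aq Ap] form_sym[of G n Aq nq])

lemma hH_qp_gram: "hH G n a b q p = (kq * ip np Ap + betq * ip np nq) / betq"
  using ridge_frame.hH_pq_gram[OF ridge_frame_swap] unfolding swap_Aq form_sym[of G n nq np] .

lemma Bq_pos: "ip Bq Bq > 0"
  using ridge_frame.Bp_pos[OF ridge_frame_swap] .

lemma Cauchy_Schwarz_Bq_Ap: "(ip Bq Ap)^2 < ip Bq Bq * ip Ap Ap"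
  using ridge_frame.Cauchy_Schwarz_Bp_Aq[OF ridge_frame_swap] unfolding swap_Aq .

lemma dih_facetP_q: "dih G n (facetP a b q) q p = arccos (ip Bq Ap / sqrt (ip Bq Bq * ip Ap Ap))"
  using ridge_frame.dih_facetP_p[OF ridge_frame_swap] unfolding swap_Aq .

lemma form_nq_Aq: "ip nq Aq = sqrt (ip Aq Aq - (ip Ap Aq)^2 / ip Ap Ap)"
  using ridge_frame.form_np_Ap[OF ridge_frame_swap] unfolding swap_Aq swap_Ap form_sym[of G n Aq Ap] .

lemma betq_gram: "betq = sqrt (ip Bq Bq - (ip Bq Ap)^2 / ip Ap Ap)"
  using ridge_frame.betp_gram[OF ridge_frame_swap] unfolding swap_Aq .

lemma kq_eq: "kq = ip Bq Ap / ip Ap Ap"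
  using ridge_frame.kp_def[OF ridge_frame_swap] unfolding swap_Aq .

lemma relation_proportional:
  "let \<alpha> = dih G n a p q;
             \<beta>pq = dih G n (facetP a b p) p q;
             \<beta>qp = dih G n (facetP a b q) q p;
             \<gamma> = dih G n (facetPQ a b p q) p q;
             A' = cos \<gamma> - cos (\<alpha> + \<beta>pq + \<beta>qp);
             B'pq = cos \<gamma> - cos (\<alpha> + \<beta>pq - \<beta>qp);
             B'qp = cos \<gamma> - cos (\<alpha> + \<beta>qp - \<beta>pq);
             C' = - 2 * sin \<beta>pq * sin \<beta>qp;
             E' = cos \<gamma> - cos (\<alpha> - \<beta>pq - \<beta>qp);
             E = eE G n a b p q;
             A = hH G n a b q p + hH G n a b p q - 2 * gG G n a p q + E;
             Bpq = hH G n a b q p + E;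
             Bqp = hH G n a b p q + E
         in \<exists>\<kappa>::real. \<kappa> \<noteq> 0 \<and>
              (\<forall>tp tq :: real.
                 A' * tp\<^sup>2 * tq\<^sup>2 + B'pq * tp\<^sup>2 + 2 * C' * tp * tq + B'qp * tq\<^sup>2 + E'
                 = \<kappa> * (A * tp\<^sup>2 * tq\<^sup>2 + Bpq * tp\<^sup>2 - 2 * tp * tq + Bqp * tq\<^sup>2 + E))"
  unfolding Let_def gG_eq
  by (rule quartic_gram_proportional[OF Ap_pos Aq_pos Bp_pos Bq_pos
      Cauchy_Schwarz_Ap_Aq Cauchy_Schwarz_Bp_Aq Cauchy_Schwarz_Bq_Ap Cauchy_Schwarz_Bp_Bq
      form_np_Ap form_nq_Aq form_np_nq betp_gram betq_gram kp_def kq_eq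
      eE_gram[unfolded form_Yp_Yq] hH_pq_gram hH_qp_gram
      dih_Delta dih_facetP_p dih_facetP_q dih_facetPQ])

end

lemma exists_third_index: assumes "n \<ge> (3::nat)" shows "\<exists>k<n. k \<noteq> p \<and> k \<noteq> q"
  using assms by (intro exI[of _ "if 0 \<noteq> p \<and> 0 \<noteq> q then 0 else if 1 \<noteq> p \<and> 1 \<noteq> q then 1 else 2"]) auto

lemma ridge_frame_exists:
  assumes "n \<ge> 3" and "p < n" and "q < n" and "p \<noteq> q" and "crossPolytope G n a b"
  shows "\<exists>k Pr. ridge_frame G n p q k a b Pr"
proof -
  obtain k where k: "k < n" "k \<noteq> p" "k \<noteq> q" using exists_third_index[OF assms(1)] by blast
  have pt_a: "\<And>s. s < n \<Longrightarrow> isPt G n (a s)" using assms(5) unfolding crossPolytope_def by blast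
  have nd: "nondeg G n a"
    using assms(5) spec[of "\<lambda>c. nondeg G n (\<lambda>i. if c i then b i else a i)" "\<lambda>_. False"]
    unfolding crossPolytope_def by simp
  have ivz: "inV (amb G n) (base_pt G a k)" using pt_a[OF k(1)] by (cases "G = Euc") (simp_all add: base_pt_def isPt_def inV_zero)
  have idx_sub: "ridge_idx G n p q k \<subseteq> frame_idx G n k" unfolding ridge_idx_def frame_idx_def by auto
  have fin_frame: "finite (frame_idx G n k)" unfolding frame_idx_def by simp
  have fin_ridge: "finite (ridge_idx G n p q k)" using idx_sub fin_frame finite_subset by blast
  have ind: "lin_indep (ridge_idx G n p q k) (\<lambda>s. shift G a k (a s))"
    by (rule lin_indep_subset[OF fin_frame nondeg_lin_indep[OF nd k(1)] idx_sub])
  have iv: "\<And>s. s \<in> ridge_idx G n p q k \<Longrightarrow> inV (amb G n) (shift G a k (a s))"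
    unfolding shift_def ridge_idx_def using pt_a ivz inV_vsub unfolding isPt_def by auto
  have hyp: "G = Hyp \<Longrightarrow> k \<in> ridge_idx G n p q k \<and> form G n (shift G a k (a k)) (shift G a k (a k)) < 0"
  proof -
    assume H: "G = Hyp"
    have "shift G a k (a k) = a k" using H unfolding shift_def base_pt_def vsub_def by simp
    moreover have "form G n (a k) (a k) = -1" using pt_a[OF k(1)] H by (simp add: isPt_def)
    ultimately show ?thesis using k H unfolding ridge_idx_def by simp
  qed
  obtain Pr where Pr: "orth_proj G n (ridge_idx G n p q k) (\<lambda>s. shift G a k (a s)) Pr"
    using orth_proj_exists[OF fin_ridge ind iv hyp] by blast
  have "ridge_frame G n p q k a b Pr"
    by unfold_locales (fact assms(1) assms(2) assms(3) assms(4) assms(5) k(1) k(2) k(3) Pr)+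
  then show ?thesis by blast
qed

theorem mainTheorem10:
  fixes G :: geom and n p q :: nat and a b :: "nat \<Rightarrow> nat \<Rightarrow> real"
  assumes "n \<ge> 3" and "p < n" and "q < n" and "p \<noteq> q"
    and "crossPolytope G n a b"
  shows "let \<alpha> = dih G n a p q;
             \<beta>pq = dih G n (facetP a b p) p q;
             \<beta>qp = dih G n (facetP a b q) q p;
             \<gamma> = dih G n (facetPQ a b p q) p q;
             A' = cos \<gamma> - cos (\<alpha> + \<beta>pq + \<beta>qp);
             B'pq = cos \<gamma> - cos (\<alpha> + \<beta>pq - \<beta>qp);
             B'qp = cos \<gamma> - cos (\<alpha> + \<beta>qp - \<beta>pq);
             C' = - 2 * sin \<beta>pq * sin \<beta>qp;
             E' = cos \<gamma> - cos (\<alpha> - \<beta>pq - \<beta>qp);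
             E = eE G n a b p q;
             A = hH G n a b q p + hH G n a b p q - 2 * gG G n a p q + E;
             Bpq = hH G n a b q p + E;
             Bqp = hH G n a b p q + E
         in \<exists>\<kappa>::real. \<kappa> \<noteq> 0 \<and>
              (\<forall>tp tq :: real.
                 A' * tp\<^sup>2 * tq\<^sup>2 + B'pq * tp\<^sup>2 + 2 * C' * tp * tq + B'qp * tq\<^sup>2 + E'
                 = \<kappa> * (A * tp\<^sup>2 * tq\<^sup>2 + Bpq * tp\<^sup>2 - 2 * tp * tq + Bqp * tq\<^sup>2 + E))"
proof -
  obtain k Pr where "ridge_frame G n p q k a b Pr" using ridge_frame_exists[OF assms] by blast
  then show ?thesis by (rule ridge_frame.relation_proportional)
qed

end
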